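(* Let $\mathcal N_{A'\to A}$ be a quantum channel and assume the reference is noninteracting with the output, $\widehat H_{RA}=\widehat H_R\otimes\mathbb 1_A+\mathbb 1_R\otimes\widehat H_A$. Then $$F^\beta_{\mathrm T}[\mathcal N]\le E[\mathcal N]-\beta^{-1}S[\mathcal N].$$ Equality holds for every replacer channel $\mathcal R^\omega_{A'\to A}(Y)=\operatorname{tr}[Y]\omega$, $\omega\in\mathrm{St}(A)$, in which case both sides equal $E(\omega)-\beta^{-1}S(\omega)$.
   Context: All Hilbert spaces are finite-dimensional, $|R|=|A'|$, $\beta>0$. $\widehat\gamma^\beta_A=e^{-\beta\widehat H_A}$ and $\widehat{\mathcal T}^\beta_{A'\to A}(Y)=\operatorname{tr}[Y]\widehat\gamma^\beta_A$; $\mathcal R^{\mathbb 1}(Y)=\operatorname{tr}[Y]\mathbb 1_A$. $D$ is the Umegaki relative entropy (second argument a positive semidefinite operator) and $D[\mathcal N\|\mathcal M]=\sup_{\psi\in\mathrm{St}(RA')}D((\mathrm{id}_R\otimes\mathcal N)(\psi)\|(\mathrm{id}_R\otimes\mathcal M)(\psi))$. Thermal free energy: $F^\beta_{\mathrm T}[\mathcal N]=\beta^{-1}D[\mathcal N\|\widehat{\mathcal T}^\beta]$. Channel entropy: $S[\mathcal N]=-D[\mathcal N\|\mathcal R^{\mathbb 1}]=\inf_{\psi}[S(RA)_{(\mathrm{id}\otimes\mathcal N)(\psi)}-S(R)_\psi]$, with $S(\rho)=-\operatorname{tr}\rho\ln\rho$. Energy of a state: $E(\rho_X)=\operatorname{tr}[\widehat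 H_X\rho_X]$; energy of a channel: $E[\mathcal N]=\sup_{\psi\in\mathrm{St}(RA')}[E((\mathrm{id}_R\otimes\mathcal N)(\psi))-E(\psi_R)]$. *)

theory Defs
  imports "Jordan_Normal_Form.Matrix" "HOL-Library.Extended_Real"
begin

definition qadj :: "complex mat \<Rightarrow> complex mat" where
  "qadj A = mat (dim_col A) (dim_row A) (\<lambda>(i,j). cnj (A $$ (j,i)))"

definition qtr :: "complex mat \<Rightarrow> complex" where
  "qtr A = (\<Sum>i<dim_row A. A $$ (i,i))"

definition hermitian :: "nat \<Rightarrow> complex mat \<Rightarrow> bool" where
  "hermitian n A \<longleftrightarrow> A \<in> carrier_mat n n \<and> qadj A = A"

definition psd :: "nat \<Rightarrow> complex mat \<Rightarrow> bool" where
  "psd n A \<longleftrightarrow> hermitian n A \<and>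
     (\<forall>v \<in> carrier_vec n. 0 \<le> Re ((A *\<^sub>v v) \<bullet>c v))"

definition density :: "nat \<Rightarrow> complex mat \<Rightarrow> bool" where
  "density n \<rho> \<longleftrightarrow> psd n \<rho> \<and> qtr \<rho> = 1"

definition unitary :: "nat \<Rightarrow> complex mat \<Rightarrow> bool" where
  "unitary n U \<longleftrightarrow> U \<in> carrier_mat n n \<and> qadj U * U = 1\<^sub>m n"

text \<open>Functional calculus for Hermitian matrices via unitary diagonalisation
  (the result does not depend on the chosen diagonalisation).\<close>
definition mat_fun :: "nat \<Rightarrow> (real \<Rightarrow> real) \<Rightarrow> complex mat \<Rightarrow> complex mat" where
  "mat_fun n f A = (SOME B. \<exists>U d. unitary n U \<and>
      A = U * mat_diag n (\<lambda>i. complex_of_real (d i)) * qadj U \<and>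
      B = U * mat_diag n (\<lambda>i. complex_of_real (f (d i))) * qadj U)"

text \<open>Logarithm on the support (convention 0 ln 0 = 0).\<close>
definition lnp :: "real \<Rightarrow> real" where
  "lnp x = (if 0 < x then ln x else 0)"

definition rel_ent :: "nat \<Rightarrow> complex mat \<Rightarrow> complex mat \<Rightarrow> ereal" where
  "rel_ent n \<rho> \<sigma> =
     (if \<forall>v \<in> carrier_vec n. \<sigma> *\<^sub>v v = 0\<^sub>v n \<longrightarrow> \<rho> *\<^sub>v v = 0\<^sub>v n
      then ereal (Re (qtr (\<rho> * (mat_fun n lnp \<rho> - mat_fun n lnp \<sigma>))))
      else \<infinity>)"

definition vn_ent :: "nat \<Rightarrow> complex mat \<Rightarrow> real" where
  "vn_ent n \<rho> = - Re (qtr (\<rho> * mat_fun n lnp \<rho>))"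

text \<open>Kronecker (tensor) product; index (i,k) of the product corresponds to i*p+k.\<close>
definition kron :: "complex mat \<Rightarrow> complex mat \<Rightarrow> complex mat" where
  "kron A B = mat (dim_row A * dim_row B) (dim_col A * dim_col B)
     (\<lambda>(i,j). A $$ (i div dim_row B, j div dim_col B) * B $$ (i mod dim_row B, j mod dim_col B))"

definition ptr2 :: "nat \<Rightarrow> nat \<Rightarrow> complex mat \<Rightarrow> complex mat" where
  "ptr2 k m X = mat k k (\<lambda>(i,j). \<Sum>a<m. X $$ (i*m + a, j*m + a))"

definition blk :: "nat \<Rightarrow> complex mat \<Rightarrow> nat \<Rightarrow> nat \<Rightarrow> complex mat" where
  "blk m X i j = mat m m (\<lambda>(a,b). X $$ (i*m + a, j*m + b))"

definition id_tensor :: "nat \<Rightarrow> nat \<Rightarrow> nat \<Rightarrow> (complex mat \<Rightarrow> complex mat) \<Rightarrow> complex mat \<Rightarrow> complex mat" where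
  "id_tensor k m n N X = mat (k*n) (k*n)
     (\<lambda>(r,c). (N (blk m X (r div n) (c div n))) $$ (r mod n, c mod n))"

definition channel :: "nat \<Rightarrow> nat \<Rightarrow> (complex mat \<Rightarrow> complex mat) \<Rightarrow> bool" where
  "channel m n N \<longleftrightarrow>
     (\<forall>X \<in> carrier_mat m m. N X \<in> carrier_mat n n) \<and>
     (\<forall>X \<in> carrier_mat m m. \<forall>Y \<in> carrier_mat m m. N (X + Y) = N X + N Y) \<and>
     (\<forall>X \<in> carrier_mat m m. \<forall>c. N (c \<cdot>\<^sub>m X) = c \<cdot>\<^sub>m N X) \<and>
     (\<forall>X \<in> carrier_mat m m. qtr (N X) = qtr X) \<and>
     (\<forall>k X. psd (k*m) X \<longrightarrow> psd (k*n) (id_tensor k m n N X))"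

definition replacer :: "complex mat \<Rightarrow> complex mat \<Rightarrow> complex mat" where
  "replacer \<omega> Y = qtr Y \<cdot>\<^sub>m \<omega>"

text \<open>Unnormalised Gibbs operator exp(-beta H).\<close>
definition gibbs :: "nat \<Rightarrow> real \<Rightarrow> complex mat \<Rightarrow> complex mat" where
  "gibbs n \<beta> H = mat_fun n (\<lambda>x. exp (- \<beta> * x)) H"

text \<open>Channel divergence, reference R of the same dimension m as the input A'.\<close>
definition chan_div :: "nat \<Rightarrow> nat \<Rightarrow> (complex mat \<Rightarrow> complex mat) \<Rightarrow> (complex mat \<Rightarrow> complex mat) \<Rightarrow> ereal" where
  "chan_div m n N M = (SUP \<psi> \<in> {\<psi>. density (m*m) \<psi>}.
      rel_ent (m*n) (id_tensor m m n N \<psi>) (id_tensor m m n M \<psi>))"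

definition free_energy_T :: "nat \<Rightarrow> nat \<Rightarrow> real \<Rightarrow> complex mat \<Rightarrow> (complex mat \<Rightarrow> complex mat) \<Rightarrow> ereal" where
  "free_energy_T m n \<beta> H_A N = ereal (1/\<beta>) * chan_div m n N (replacer (gibbs n \<beta> H_A))"

definition chan_ent :: "nat \<Rightarrow> nat \<Rightarrow> (complex mat \<Rightarrow> complex mat) \<Rightarrow> ereal" where
  "chan_ent m n N = - chan_div m n N (replacer (1\<^sub>m n))"

definition energy :: "complex mat \<Rightarrow> complex mat \<Rightarrow> real" where
  "energy H \<rho> = Re (qtr (H * \<rho>))"

definition chan_energy :: "nat \<Rightarrow> nat \<Rightarrow> complex mat \<Rightarrow> complex mat \<Rightarrow> (complex mat \<Rightarrow> complex mat) \<Rightarrow> ereal" where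
  "chan_energy m n H_RA H_R N = (SUP \<psi> \<in> {\<psi>. density (m*m) \<psi>}.
      ereal (energy H_RA (id_tensor m m n N \<psi>) - energy H_R (ptr2 m m \<psi>)))"

end

theory Submission
  imports Defs "Jordan_Normal_Form.Schur_Decomposition"
begin

text \<open>
  Fix an input state \<psi> on RA', its output \<rho> = (id \<otimes> N)(\<psi>) and the reduced state
  R = \<psi>_R, which is also the reduced state of \<rho> because N is trace preserving. The output
  of the thermal replacer is R \<otimes> \<gamma> and that of the replacer of 1 is R \<otimes> 1. Since
  \<gamma> = exp(-\<beta> H_A) is invertible, both have the same support, and on it
  ln (R \<otimes> \<gamma>) = ln R \<otimes> 1 - \<beta> \<Pi>_R \<otimes> H_A, where \<Pi>_R is the support projection of R.
  As \<rho> lives on the support of R \<otimes> 1, the projection \<Pi>_R can be dropped, so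
  D(\<rho> \<parallel> R \<otimes> \<gamma>) = D(\<rho> \<parallel> R \<otimes> 1) + \<beta> tr[\<rho> (1 \<otimes> H_A)]
  exactly, and for a noninteracting reference tr[\<rho> (1 \<otimes> H_A)] = E(\<rho>) - E(R).
  A supremum of a sum is at most the sum of the suprema, which gives the inequality.
  For a replacer channel the output is R \<otimes> \<omega>, so D(R \<otimes> \<omega> \<parallel> R \<otimes> 1) = -S(\<omega>) and the
  energy change is E(\<omega>), independently of \<psi>: all suprema are attained by every \<psi>.
\<close>

section \<open>Unitary diagonalisation\<close>

abbreviation rdiag :: "nat \<Rightarrow> (nat \<Rightarrow> real) \<Rightarrow> complex mat" where
  "rdiag n d \<equiv> mat_diag n (\<lambda>i. complex_of_real (d i))"

lemma mat_diag_dims [simp]: "dim_row (mat_diag n f) = n" "dim_col (mat_diag n f) = n"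
  by (simp_all add: mat_diag_def)

lemma rdiag_cong: "(\<And>k. k < n \<Longrightarrow> f k = g k) \<Longrightarrow> rdiag n f = rdiag n g"
  by (rule eq_matI) (simp_all add: mat_diag_def)

lemma mult_rdiag_index:
  "A \<in> carrier_mat k n \<Longrightarrow> i < k \<Longrightarrow> j < n \<Longrightarrow> (A * rdiag n d) $$ (i,j) = A $$ (i,j) * d j"
  by (subst mat_diag_mult_right[of A k n]) simp_all

lemma rdiag_mult_index:
  "A \<in> carrier_mat n k \<Longrightarrow> i < n \<Longrightarrow> j < k \<Longrightarrow> (rdiag n d * A) $$ (i,j) = d i * A $$ (i,j)"
  by (subst mat_diag_mult_left[of A n k]) simp_all

lemma mult_index_sum:
  assumes "A \<in> carrier_mat a n" "B \<in> carrier_mat n b" "i < a" "j < b"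
  shows "(A * B) $$ (i,j) = (\<Sum>l<n. A $$ (i,l) * B $$ (l,j))"
  using assms by (simp add: scalar_prod_def lessThan_atLeast0)

lemma qadj_dims [simp]: "dim_row (qadj A) = dim_col A" "dim_col (qadj A) = dim_row A"
  by (auto simp: qadj_def)

lemma qadj_index [simp]: "i < dim_col A \<Longrightarrow> j < dim_row A \<Longrightarrow> qadj A $$ (i,j) = cnj (A $$ (j,i))"
  by (auto simp: qadj_def)

lemma qadj_carrier [simp]: "A \<in> carrier_mat n m \<Longrightarrow> qadj A \<in> carrier_mat m n"
  unfolding carrier_mat_def by simp

lemma qadj_qadj [simp]: "qadj (qadj A) = A"
  by (rule eq_matI) auto

lemma qadj_rdiag [simp]: "qadj (rdiag n d) = rdiag n d"
  by (rule eq_matI) (auto simp: mat_diag_def)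

lemma qadj_one [simp]: "qadj (1\<^sub>m n) = 1\<^sub>m n"
  by (rule eq_matI) auto

lemma qadj_mult: "dim_col A = dim_row B \<Longrightarrow> qadj (A * B) = qadj B * qadj A"
  by (rule eq_matI) (auto simp: scalar_prod_def intro: sum.cong)

lemma qadj_mult_index:
  assumes U: "U \<in> carrier_mat n n" and "i < n" "j < n"
  shows "(qadj U * U) $$ (i,j) = (\<Sum>l<n. cnj (U $$ (l,i)) * U $$ (l,j))"
proof -
  have "(qadj U * U) $$ (i,j) = (\<Sum>l<n. qadj U $$ (i,l) * U $$ (l,j))"
    using assms by (intro mult_index_sum[of _ n n _ n]) simp_all
  also have "\<dots> = (\<Sum>l<n. cnj (U $$ (l,i)) * U $$ (l,j))"
    using assms by (intro sum.cong) (simp_all add: carrier_matD)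
  finally show ?thesis .
qed

lemma unitary_carrier [simp]: "unitary n U \<Longrightarrow> U \<in> carrier_mat n n"
  by (simp add: unitary_def)

lemma unitary_left: "unitary n U \<Longrightarrow> qadj U * U = 1\<^sub>m n"
  by (simp add: unitary_def)

lemma unitary_right: "unitary n U \<Longrightarrow> U * qadj U = 1\<^sub>m n"
  unfolding unitary_def by (intro mat_mult_left_right_inverse[of "qadj U" n U]) simp_all

lemma unitary_one: "unitary n (1\<^sub>m n)"
  unfolding unitary_def by simp

lemma unitary_mult:
  assumes U: "unitary n U" and V: "unitary n V"
  shows "unitary n (U * V)"
proof -
  have Uc: "U \<in> carrier_mat n n" and Vc: "V \<in> carrier_mat n n" using U V by simp_all
  have "qadj (U * V) * (U * V) = (qadj V * qadj U) * (U * V)"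
    using Uc Vc by (simp add: qadj_mult)
  also have "\<dots> = qadj V * ((qadj U * U) * V)"
    using Uc Vc by (simp add: assoc_mult_mat[of _ n n _ n _ n])
  also have "\<dots> = 1\<^sub>m n" using unitary_left[OF U] unitary_left[OF V] Vc by simp
  finally show ?thesis unfolding unitary_def using Uc Vc by simp
qed

lemma conj_rdiag_carrier: "U \<in> carrier_mat n n \<Longrightarrow> U * rdiag n f * qadj U \<in> carrier_mat n n"
  by (intro carrier_matI) (simp_all add: carrier_matD)

lemma conj_rdiag_index:
  assumes U: "U \<in> carrier_mat n n" and "i < n" "j < n"
  shows "(U * rdiag n d * qadj U) $$ (i,j) = (\<Sum>l<n. U $$ (i,l) * d l * cnj (U $$ (j,l)))"
proof -
  have "(U * rdiag n d * qadj U) $$ (i,j) = (\<Sum>l<n. (U * rdiag n d) $$ (i,l) * qadj U $$ (l,j))"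
    using assms by (intro mult_index_sum[of _ n n _ n]) (simp_all add: carrier_matD)
  also have "\<dots> = (\<Sum>l<n. U $$ (i,l) * d l * cnj (U $$ (j,l)))"
    using assms by (intro sum.cong refl, subst mult_rdiag_index[OF U]) simp_all
  finally show ?thesis .
qed

lemma conj_rdiag_add:
  assumes U: "U \<in> carrier_mat n n"
  shows "U * rdiag n f * qadj U + U * rdiag n g * qadj U = U * rdiag n (\<lambda>k. f k + g k) * qadj U"
proof (rule eq_matI)
  fix i j assume "i < dim_row (U * rdiag n (\<lambda>k. f k + g k) * qadj U)"
    "j < dim_col (U * rdiag n (\<lambda>k. f k + g k) * qadj U)"
  hence ij: "i < n" "j < n" using U by simp_all
  have "(U * rdiag n f * qadj U + U * rdiag n g * qadj U) $$ (i,j)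
      = (U * rdiag n f * qadj U) $$ (i,j) + (U * rdiag n g * qadj U) $$ (i,j)"
    using ij U by simp
  also have "\<dots> = (\<Sum>l<n. U $$ (i,l) * f l * cnj (U $$ (j,l)) + U $$ (i,l) * g l * cnj (U $$ (j,l)))"
    unfolding conj_rdiag_index[OF U ij] by (rule sum.distrib[symmetric])
  also have "\<dots> = (U * rdiag n (\<lambda>k. f k + g k) * qadj U) $$ (i,j)"
    unfolding conj_rdiag_index[OF U ij] by (intro sum.cong refl) (simp add: algebra_simps)
  finally show "(U * rdiag n f * qadj U + U * rdiag n g * qadj U) $$ (i,j)
      = (U * rdiag n (\<lambda>k. f k + g k) * qadj U) $$ (i,j)" .
qed (use U in simp_all)

lemma conj_rdiag_smult:
  assumes U: "U \<in> carrier_mat n n"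
  shows "complex_of_real c \<cdot>\<^sub>m (U * rdiag n f * qadj U) = U * rdiag n (\<lambda>k. c * f k) * qadj U"
proof (rule eq_matI)
  fix i j assume "i < dim_row (U * rdiag n (\<lambda>k. c * f k) * qadj U)"
    "j < dim_col (U * rdiag n (\<lambda>k. c * f k) * qadj U)"
  hence ij: "i < n" "j < n" using U by simp_all
  have "(complex_of_real c \<cdot>\<^sub>m (U * rdiag n f * qadj U)) $$ (i,j)
      = complex_of_real c * (U * rdiag n f * qadj U) $$ (i,j)"
    using ij U by simp
  also have "\<dots> = (U * rdiag n (\<lambda>k. c * f k) * qadj U) $$ (i,j)"
    unfolding conj_rdiag_index[OF U ij] sum_distrib_left by (intro sum.cong refl) (simp add: algebra_simps)
  finally show "(complex_of_real c \<cdot>\<^sub>m (U * rdiag n f * qadj U)) $$ (i,j)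
      = (U * rdiag n (\<lambda>k. c * f k) * qadj U) $$ (i,j)" .
qed (use U in simp_all)

lemma conj_rdiag_zero:
  assumes U: "U \<in> carrier_mat n n"
  shows "U * rdiag n (\<lambda>k. 0) * qadj U = 0\<^sub>m n n"
proof (rule eq_matI)
  fix i j assume "i < dim_row (0\<^sub>m n n :: complex mat)" "j < dim_col (0\<^sub>m n n :: complex mat)"
  hence ij: "i < n" "j < n" by simp_all
  show "(U * rdiag n (\<lambda>k. 0) * qadj U) $$ (i,j) = 0\<^sub>m n n $$ (i,j)"
    unfolding conj_rdiag_index[OF U ij] using ij by simp
qed (use U in simp_all)

lemma conj_rdiag_one: "unitary n U \<Longrightarrow> U * rdiag n (\<lambda>k. 1) * qadj U = 1\<^sub>m n"
proof -
  assume U: "unitary n U"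
  have "rdiag n (\<lambda>k. 1) = 1\<^sub>m n" by (rule eq_matI) (simp_all add: mat_diag_def)
  thus ?thesis using unitary_right[OF U] right_mult_one_mat[of U n n] U by simp
qed

lemma conj_rdiag_mult:
  assumes U: "unitary n U"
  shows "(U * rdiag n f * qadj U) * (U * rdiag n g * qadj U) = U * rdiag n (\<lambda>k. f k * g k) * qadj U"
proof -
  have [simp]: "U \<in> carrier_mat n n" using U by simp
  note sq = assoc_mult_mat[of _ n n _ n _ n] mult_carrier_mat[of _ n n]
  have "(U * rdiag n f * qadj U) * (U * rdiag n g * qadj U)
      = U * rdiag n f * (qadj U * U) * rdiag n g * qadj U"
    by (simp add: sq)
  also have "\<dots> = U * (rdiag n f * rdiag n g) * qadj U"
    using unitary_left[OF U] by (simp add: sq)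
  finally show ?thesis by simp
qed

lemma intertwiner_rdiag_fun:
  assumes X: "X \<in> carrier_mat n n" and XD: "X * rdiag n a = rdiag n b * X"
  shows "X * rdiag n (f \<circ> a) = rdiag n (f \<circ> b) * X"
proof (rule eq_matI)
  fix i j assume "i < dim_row (rdiag n (f \<circ> b) * X)" "j < dim_col (rdiag n (f \<circ> b) * X)"
  hence ij: "i < n" "j < n" using X by simp_all
  have "X $$ (i,j) * a j = b i * X $$ (i,j)"
    using arg_cong[OF XD, of "\<lambda>M. M $$ (i,j)"] ij
    by (simp add: mult_rdiag_index[OF X] rdiag_mult_index[OF X])
  hence "X $$ (i,j) = 0 \<or> a j = b i" by (metis mult.commute mult_cancel_left of_real_eq_iff)
  hence "X $$ (i,j) * f (a j) = f (b i) * X $$ (i,j)" by auto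
  thus "(X * rdiag n (f \<circ> a)) $$ (i,j) = (rdiag n (f \<circ> b) * X) $$ (i,j)"
    by (simp add: mult_rdiag_index[OF X ij] rdiag_mult_index[OF X ij])
qed (use X in simp_all)

lemma conj_rdiag_fun_cong:
  assumes U: "unitary n U" and V: "unitary n V"
    and eq: "U * rdiag n a * qadj U = V * rdiag n b * qadj V"
  shows "U * rdiag n (f \<circ> a) * qadj U = V * rdiag n (f \<circ> b) * qadj V"
proof -
  have [simp]: "U \<in> carrier_mat n n" "V \<in> carrier_mat n n" using U V by simp_all
  note sq = assoc_mult_mat[of _ n n _ n _ n] mult_carrier_mat[of _ n n]
    left_mult_one_mat[of _ n n] right_mult_one_mat[of _ n n]
  define X where "X = qadj V * U"
  have X: "X \<in> carrier_mat n n" unfolding X_def by (simp add: sq)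
  have "X * rdiag n a = qadj V * (U * rdiag n a * qadj U) * U"
    using unitary_left[OF U] by (simp add: X_def sq)
  also have "\<dots> = (qadj V * V) * rdiag n b * (qadj V * U)"
    unfolding eq by (simp add: sq)
  also have "\<dots> = rdiag n b * X"
    using unitary_left[OF V] by (simp add: X_def sq)
  finally have XDf: "X * rdiag n (f \<circ> a) = rdiag n (f \<circ> b) * X"
    by (rule intertwiner_rdiag_fun[OF X])
  have VX: "V * X = U"
  proof -
    have "V * X = (V * qadj V) * U" by (simp add: X_def sq)
    thus ?thesis using unitary_right[OF V] by (simp add: sq)
  qed
  have XU: "X * qadj U = qadj V"
  proof -
    have "X * qadj U = qadj V * (U * qadj U)" by (simp add: X_def sq)
    thus ?thesis using unitary_right[OF U] by (simp add: sq)
  qed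
  have "U * rdiag n (f \<circ> a) * qadj U = V * (X * rdiag n (f \<circ> a)) * qadj U"
    unfolding VX[symmetric] using X by (simp add: sq)
  also have "\<dots> = V * rdiag n (f \<circ> b) * (X * qadj U)"
    unfolding XDf using X by (simp add: sq)
  finally show ?thesis unfolding XU .
qed

lemma mat_fun_conj_rdiag:
  assumes U: "unitary n U" and A: "A = U * rdiag n d * qadj U"
  shows "mat_fun n f A = U * rdiag n (\<lambda>i. f (d i)) * qadj U"
proof -
  let ?P = "\<lambda>B. \<exists>U d. unitary n U \<and> A = U * rdiag n d * qadj U \<and> B = U * rdiag n (\<lambda>i. f (d i)) * qadj U"
  have "?P (mat_fun n f A)" unfolding mat_fun_def by (rule someI[of ?P]) (use U A in blast)
  then obtain V e where V: "unitary n V" and "A = V * rdiag n e * qadj V"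
    and "mat_fun n f A = V * rdiag n (\<lambda>i. f (e i)) * qadj V" by blast
  with conj_rdiag_fun_cong[OF V U, of e d f] A show ?thesis by (simp add: comp_def)
qed

lemma cscalar_prod_self_sqrt:
  fixes v :: "complex vec"
  defines "s \<equiv> sqrt (Re (v \<bullet>c v))"
  shows "complex_of_real s * complex_of_real s = v \<bullet>c v" and "v \<bullet>c v \<noteq> 0 \<Longrightarrow> s \<noteq> 0"
proof -
  define r where "r = (\<Sum>i<dim_vec v. (cmod (v $ i))\<^sup>2)"
  have "v \<bullet>c v = (\<Sum>i<dim_vec v. v $ i * cnj (v $ i))"
    unfolding scalar_prod_def by (simp add: lessThan_atLeast0)
  also have "\<dots> = complex_of_real r"
    unfolding r_def of_real_sum by (rule sum.cong, simp, rule complex_norm_square[symmetric])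
  finally have v: "v \<bullet>c v = complex_of_real r" .
  have "0 \<le> r" unfolding r_def by (simp add: sum_nonneg)
  thus "complex_of_real s * complex_of_real s = v \<bullet>c v" and "v \<bullet>c v \<noteq> 0 \<Longrightarrow> s \<noteq> 0"
    unfolding s_def v by (simp_all flip: of_real_mult)
qed

lemma unitary_of_corthogonal:
  fixes ws :: "complex vec list"
  assumes orth: "corthogonal ws" and ws: "set ws \<subseteq> carrier_vec n" and len: "length ws = n"
  shows "\<exists>W. unitary n W \<and> (\<forall>j<n. \<exists>c. col W j = c \<cdot>\<^sub>v ws ! j)"
proof -
  have wsd: "dim_vec (ws ! j) = n" if "j < n" for j
  proof -
    have "ws ! j \<in> carrier_vec n" using ws len that nth_mem by blast
    thus ?thesis by (rule carrier_vecD)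
  qed
  define s where "s j = sqrt (Re (ws ! j \<bullet>c ws ! j))" for j
  have ss: "complex_of_real (s j) * complex_of_real (s j) = ws ! j \<bullet>c ws ! j" for j
    unfolding s_def by (rule cscalar_prod_self_sqrt)
  have s0: "s j \<noteq> 0" if "j < n" for j
    unfolding s_def using orth len that by (intro cscalar_prod_self_sqrt(2)) (auto simp: corthogonal_def)
  define W where "W = mat n n (\<lambda>(i,j). ws ! j $ i / complex_of_real (s j))"
  have Wc: "W \<in> carrier_mat n n" by (simp add: W_def)
  have "qadj W * W = 1\<^sub>m n"
  proof (rule eq_matI)
    fix i j assume "i < dim_row (1\<^sub>m n :: complex mat)" "j < dim_col (1\<^sub>m n :: complex mat)"
    hence ij: "i < n" "j < n" by simp_all
    have "(qadj W * W) $$ (i,j)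
        = (\<Sum>l<n. ws ! j $ l * cnj (ws ! i $ l)) / (complex_of_real (s i) * complex_of_real (s j))"
      unfolding qadj_mult_index[OF Wc ij] sum_divide_distrib using ij
      by (intro sum.cong refl) (simp add: W_def)
    also have "(\<Sum>l<n. ws ! j $ l * cnj (ws ! i $ l)) = ws ! j \<bullet>c ws ! i"
      unfolding scalar_prod_def using wsd ij by (simp add: lessThan_atLeast0)
    finally have e: "(qadj W * W) $$ (i,j)
        = (ws ! j \<bullet>c ws ! i) / (complex_of_real (s i) * complex_of_real (s j))" .
    show "(qadj W * W) $$ (i,j) = 1\<^sub>m n $$ (i,j)"
    proof (cases "i = j")
      case True
      thus ?thesis using e ij ss[of i] s0[OF ij(1)] orth len
        unfolding corthogonal_def by simp
    next
      case False
      hence "ws ! j \<bullet>c ws ! i = 0" using orth len ij unfolding corthogonal_def by auto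
      thus ?thesis using e False ij by simp
    qed
  qed (simp_all add: W_def)
  moreover have "col W j = (1 / complex_of_real (s j)) \<cdot>\<^sub>v ws ! j" if "j < n" for j
    using that wsd[OF that] by (intro eq_vecI) (simp_all add: W_def)
  ultimately show ?thesis unfolding unitary_def using Wc by blast
qed

lemma unitary_first_col:
  fixes v :: "complex vec"
  assumes v: "v \<in> carrier_vec n" "v \<noteq> 0\<^sub>v n"
  obtains W c where "unitary n W" "col W 0 = c \<cdot>\<^sub>v v"
proof -
  interpret cof_vec_space n "TYPE(complex)" .
  define b where "b = basis_completion v"
  note bc = basis_completion[OF v, folded b_def]
  have "0 < n"
  proof (rule ccontr)
    assume "\<not> 0 < n"
    hence "v = 0\<^sub>v n" using carrier_vecD[OF v(1)] by (intro eq_vecI) simp_all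
    thus False using v(2) by simp
  qed
  then obtain vs where bv: "b = v # vs" using bc(6,7) by (cases b) auto
  define ws where "ws = gram_schmidt n b"
  note gs = gram_schmidt_result[OF bc(2) bc(4) bc(5) ws_def]
  have "length ws = n" using gs(4) bc(6) by simp
  then obtain W where W: "unitary n W" and cols: "\<forall>j<n. \<exists>c. col W j = c \<cdot>\<^sub>v ws ! j"
    using unitary_of_corthogonal[OF gs(2) gs(3)] by blast
  have "hd ws = v" unfolding ws_def bv using v(1) by simp
  hence "ws ! 0 = v" using \<open>length ws = n\<close> \<open>0 < n\<close> by (cases ws) auto
  thus ?thesis using that W cols \<open>0 < n\<close> by metis
qed

definition dsum_one :: "nat \<Rightarrow> complex mat \<Rightarrow> complex mat" where
  "dsum_one k U = mat (Suc k) (Suc k)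
     (\<lambda>(i,j). if i = 0 \<or> j = 0 then (if i = j then 1 else 0) else U $$ (i - 1, j - 1))"

lemma dsum_one_carrier: "dsum_one k U \<in> carrier_mat (Suc k) (Suc k)"
  by (simp add: dsum_one_def)

lemma unitary_dsum_one:
  assumes U: "unitary k U"
  shows "unitary (Suc k) (dsum_one k U)"
proof -
  let ?D = "dsum_one k U"
  have Uc: "U \<in> carrier_mat k k" using U by simp
  have "qadj ?D * ?D = 1\<^sub>m (Suc k)"
  proof (rule eq_matI)
    fix i j assume "i < dim_row (1\<^sub>m (Suc k) :: complex mat)" "j < dim_col (1\<^sub>m (Suc k) :: complex mat)"
    hence ij: "i < Suc k" "j < Suc k" by simp_all
    have "(qadj ?D * ?D) $$ (i,j)
        = cnj (?D $$ (0,i)) * ?D $$ (0,j) + (\<Sum>l<k. cnj (?D $$ (Suc l,i)) * ?D $$ (Suc l,j))"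
      unfolding qadj_mult_index[OF dsum_one_carrier ij] by (rule sum.lessThan_Suc_shift)
    also have "\<dots> = 1\<^sub>m (Suc k) $$ (i,j)"
    proof (cases i; cases j)
      fix i' j' assume i: "i = Suc i'" and j: "j = Suc j'"
      have "(\<Sum>l<k. cnj (?D $$ (Suc l,i)) * ?D $$ (Suc l,j)) = (\<Sum>l<k. cnj (U $$ (l,i')) * U $$ (l,j'))"
        using ij i j by (intro sum.cong refl) (simp add: dsum_one_def)
      also have "\<dots> = (qadj U * U) $$ (i',j')" using ij i j by (simp add: qadj_mult_index[OF Uc])
      finally show ?thesis using ij unitary_left[OF U] i j by (simp add: dsum_one_def)
    qed (use ij in \<open>simp_all add: dsum_one_def\<close>)
    finally show "(qadj ?D * ?D) $$ (i,j) = 1\<^sub>m (Suc k) $$ (i,j)" .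
  qed (simp_all add: dsum_one_def)
  thus ?thesis unfolding unitary_def using dsum_one_carrier by blast
qed

definition lower_block :: "nat \<Rightarrow> complex mat \<Rightarrow> complex mat" where
  "lower_block k A = mat k k (\<lambda>(i,j). A $$ (Suc i, Suc j))"

lemma lower_block_carrier: "lower_block k A \<in> carrier_mat k k"
  by (simp add: lower_block_def)

lemma hermitian_entry:
  "A \<in> carrier_mat n n \<Longrightarrow> qadj A = A \<Longrightarrow> i < n \<Longrightarrow> j < n \<Longrightarrow> A $$ (i,j) = cnj (A $$ (j,i))"
  by (metis carrier_matD qadj_index)

lemma qadj_lower_block:
  assumes A: "A \<in> carrier_mat (Suc k) (Suc k)" and hA: "qadj A = A"
  shows "qadj (lower_block k A) = lower_block k A"
proof (rule eq_matI)
  fix i j assume "i < dim_row (lower_block k A)" "j < dim_col (lower_block k A)"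
  hence "Suc i < Suc k" "Suc j < Suc k" by (simp_all add: lower_block_def)
  from hermitian_entry[OF A hA this] show "qadj (lower_block k A) $$ (i,j) = lower_block k A $$ (i,j)"
    using \<open>Suc i < Suc k\<close> \<open>Suc j < Suc k\<close> by (simp add: lower_block_def)
qed (simp_all add: lower_block_def)

lemma hermitian_first_col:
  assumes A: "A \<in> carrier_mat (Suc k) (Suc k)" and hA: "qadj A = A"
    and col0: "\<And>i. i < Suc k \<Longrightarrow> A $$ (i,0) = (if i = 0 then e else 0)"
  shows "e = complex_of_real (Re e)"
    and "\<And>j. j < Suc k \<Longrightarrow> A $$ (0,j) = (if j = 0 then complex_of_real (Re e) else 0)"
proof -
  have "A $$ (0,0) = e" using col0[of 0] by simp
  hence "e = cnj e" using hermitian_entry[OF A hA zero_less_Suc zero_less_Suc] by metis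
  thus e: "e = complex_of_real (Re e)" by (metis Reals_cnj_iff complex_is_Real_iff of_real_Re)
  fix j assume "j < Suc k"
  with hermitian_entry[OF A hA zero_less_Suc this] col0[OF this] e
  show "A $$ (0,j) = (if j = 0 then complex_of_real (Re e) else 0)"
    by (metis complex_cnj_complex_of_real complex_cnj_zero)
qed

lemma conj_rdiag_dsum_one:
  assumes U: "U \<in> carrier_mat k k" and A: "A \<in> carrier_mat (Suc k) (Suc k)"
    and col0: "\<And>i. i < Suc k \<Longrightarrow> A $$ (i,0) = (if i = 0 then complex_of_real e else 0)"
    and row0: "\<And>j. j < Suc k \<Longrightarrow> A $$ (0,j) = (if j = 0 then complex_of_real e else 0)"
    and block: "lower_block k A = U * rdiag k d * qadj U"
  shows "A = dsum_one k U * rdiag (Suc k) (case_nat e d) * qadj (dsum_one k U)"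
proof (rule eq_matI)
  let ?D = "dsum_one k U"
  fix i j assume "i < dim_row (?D * rdiag (Suc k) (case_nat e d) * qadj ?D)"
    "j < dim_col (?D * rdiag (Suc k) (case_nat e d) * qadj ?D)"
  hence ij: "i < Suc k" "j < Suc k" by (simp_all add: dsum_one_def)
  have "(?D * rdiag (Suc k) (case_nat e d) * qadj ?D) $$ (i,j)
      = ?D $$ (i,0) * e * cnj (?D $$ (j,0))
        + (\<Sum>l<k. ?D $$ (i,Suc l) * d l * cnj (?D $$ (j,Suc l)))"
    unfolding conj_rdiag_index[OF dsum_one_carrier ij] by (subst sum.lessThan_Suc_shift) simp
  also have "\<dots> = A $$ (i,j)"
  proof (cases i; cases j)
    fix i' j' assume i: "i = Suc i'" and j: "j = Suc j'"
    have "(\<Sum>l<k. ?D $$ (i,Suc l) * d l * cnj (?D $$ (j,Suc l)))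
        = (\<Sum>l<k. U $$ (i',l) * d l * cnj (U $$ (j',l)))"
      using ij i j by (intro sum.cong refl) (simp add: dsum_one_def)
    also have "\<dots> = (U * rdiag k d * qadj U) $$ (i',j')" using ij i j by (simp add: conj_rdiag_index[OF U])
    also have "\<dots> = A $$ (i,j)" using ij i j by (simp add: block[symmetric] lower_block_def)
    finally show ?thesis using ij i j by (simp add: dsum_one_def)
  qed (use ij col0 row0 in \<open>simp_all add: dsum_one_def\<close>)
  finally show "A $$ (i,j) = (?D * rdiag (Suc k) (case_nat e d) * qadj ?D) $$ (i,j)" ..
qed (use A in \<open>simp_all add: dsum_one_def\<close>)

lemma complex_mat_eigenvector:
  fixes A :: "complex mat"
  assumes A: "A \<in> carrier_mat n n" and n: "0 < n"
  obtains e v where "v \<in> carrier_vec n" "v \<noteq> 0\<^sub>v n" "A *\<^sub>v v = e \<cdot>\<^sub>v v"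
proof -
  obtain as where cp: "char_poly A = (\<Prod>a\<leftarrow>as. [:- a, 1:])" and len: "length as = n"
    using char_poly_factorized[OF A] by blast
  obtain e as' where as: "as = e # as'" using len n by (cases as) auto
  have "poly (char_poly A) e = 0" unfolding cp as by simp
  hence "eigenvalue A e" using eigenvalue_root_char_poly[OF A] by simp
  hence "eigenvector A (find_eigenvector A e) e" by (rule find_eigenvector[OF A])
  thus ?thesis using that A unfolding eigenvector_def by auto
qed

lemma unitary_conj_eigencol:
  assumes A: "A \<in> carrier_mat n n" and W: "unitary n W" and n: "0 < n"
    and ev: "A *\<^sub>v col W 0 = e \<cdot>\<^sub>v col W 0"
  shows "col (qadj W * A * W) 0 = e \<cdot>\<^sub>v unit_vec n 0"
proof -
  have Wc: "W \<in> carrier_mat n n" and qWc: "qadj W \<in> carrier_mat n n" using W by simp_all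
  have AW: "A * W \<in> carrier_mat n n" using A Wc by simp
  have "col (qadj W * A * W) 0 = qadj W *\<^sub>v (A *\<^sub>v col W 0)"
    using A Wc qWc by (simp add: assoc_mult_mat[of _ n n _ n _ n] col_mult2[OF qWc AW n]
        col_mult2[OF A Wc n])
  also have "\<dots> = e \<cdot>\<^sub>v (qadj W *\<^sub>v col W 0)"
    unfolding ev by (rule mult_mat_vec[OF qWc], rule carrier_vecI) (use Wc in simp)
  also have "qadj W *\<^sub>v col W 0 = col (qadj W * W) 0" using col_mult2[OF qWc Wc n] by simp
  also have "\<dots> = unit_vec n 0" using unitary_left[OF W] n by simp
  finally show ?thesis .
qed

lemma unitary_deflation:
  fixes A :: "complex mat"
  assumes A: "A \<in> carrier_mat (Suc k) (Suc k)"
  obtains W e where "unitary (Suc k) W"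
    "\<And>i. i < Suc k \<Longrightarrow> (qadj W * A * W) $$ (i,0) = (if i = 0 then e else 0)"
proof -
  obtain e v where v: "v \<in> carrier_vec (Suc k)" "v \<noteq> 0\<^sub>v (Suc k)" "A *\<^sub>v v = e \<cdot>\<^sub>v v"
    using complex_mat_eigenvector[OF A zero_less_Suc] by blast
  obtain W c where W: "unitary (Suc k) W" and colW: "col W 0 = c \<cdot>\<^sub>v v"
    using unitary_first_col[OF v(1,2)] by blast
  have "A *\<^sub>v col W 0 = e \<cdot>\<^sub>v col W 0"
    unfolding colW using mult_mat_vec[OF A v(1)] v(3) by (simp add: smult_smult_assoc mult.commute)
  hence col: "col (qadj W * A * W) 0 = e \<cdot>\<^sub>v unit_vec (Suc k) 0"
    by (rule unitary_conj_eigencol[OF A W zero_less_Suc])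
  have "(qadj W * A * W) $$ (i,0) = (if i = 0 then e else 0)" if "i < Suc k" for i
  proof -
    have "(qadj W * A * W) $$ (i,0) = col (qadj W * A * W) 0 $ i"
      using that unitary_carrier[OF W] by (simp add: carrier_matD)
    thus ?thesis unfolding col using that by simp
  qed
  with W show ?thesis by (rule that)
qed

lemma hermitian_decomp:
  assumes "hermitian n A"
  obtains U d where "unitary n U" "A = U * rdiag n d * qadj U"
proof -
  have "\<exists>U d. unitary n U \<and> A = U * rdiag n d * qadj U"
    using assms unfolding hermitian_def
  proof (induction n arbitrary: A)
    case 0
    hence "A = 1\<^sub>m 0 * rdiag 0 (\<lambda>_. 0) * qadj (1\<^sub>m 0)" by (intro eq_matI) auto
    thus ?case by (intro exI[of _ "1\<^sub>m 0"] exI[of _ "\<lambda>_. 0"] conjI unitary_one)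
  next
    case (Suc k)
    have A: "A \<in> carrier_mat (Suc k) (Suc k)" and hA: "qadj A = A" using Suc.prems by simp_all
    obtain W e where W: "unitary (Suc k) W"
      and col0: "\<And>i. i < Suc k \<Longrightarrow> (qadj W * A * W) $$ (i,0) = (if i = 0 then e else 0)"
      using unitary_deflation[OF A] by blast
    have Wc: "W \<in> carrier_mat (Suc k) (Suc k)" using W by simp
    note sq = assoc_mult_mat[of _ "Suc k" "Suc k" _ "Suc k" _ "Suc k"] mult_carrier_mat[of _ "Suc k" "Suc k"]
      right_mult_one_mat[of _ "Suc k" "Suc k"] left_mult_one_mat[of _ "Suc k" "Suc k"]
    define A' where "A' = qadj W * A * W"
    have A'c: "A' \<in> carrier_mat (Suc k) (Suc k)" unfolding A'_def using A Wc by (simp add: sq)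
    have hA': "qadj A' = A'" unfolding A'_def using A Wc by (simp add: qadj_mult hA sq)
    obtain U d where U: "unitary k U" and B: "lower_block k A' = U * rdiag k d * qadj U"
      using Suc.IH[OF conjI[OF lower_block_carrier qadj_lower_block[OF A'c hA']]] by blast
    have "A' = dsum_one k U * rdiag (Suc k) (case_nat (Re e) d) * qadj (dsum_one k U)"
      using hermitian_first_col[OF A'c hA' col0[folded A'_def]]
      by (intro conj_rdiag_dsum_one[OF unitary_carrier[OF U] A'c _ _ B]) (simp_all add: col0 A'_def)
    moreover have "A = W * A' * qadj W"
    proof -
      have "W * A' * qadj W = (W * qadj W) * A * (W * qadj W)"
        unfolding A'_def using A Wc by (simp add: sq)
      thus ?thesis using unitary_right[OF W] A by (simp add: sq)
    qed
    ultimately have "A = (W * dsum_one k U) * rdiag (Suc k) (case_nat (Re e) d) * qadj (W * dsum_one k U)"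
      using Wc dsum_one_carrier[of k U] by (simp add: sq qadj_mult)
    thus ?case using unitary_mult[OF W unitary_dsum_one[OF U]] by (intro exI conjI)
  qed
  thus ?thesis using that by blast
qed

section \<open>Tensor products, traces and partial traces\<close>

lemma sum_lessThan_mult: "(\<Sum>l<p*q. f l) = (\<Sum>x<p. \<Sum>y<(q::nat). f (x*q + y))"
proof -
  have "(\<Sum>l<p*q. f l) = (\<Sum>x<p. sum f {x*q..<x*q+q})" by (rule sum.nat_group[symmetric])
  also have "\<dots> = (\<Sum>x<p. \<Sum>y<q. f (x*q + y))"
  proof (rule sum.cong[OF refl])
    fix x
    have "sum f {x*q..<x*q+q} = sum f {0 + x*q..<q + x*q}" by (simp add: add.commute)
    also have "\<dots> = (\<Sum>y\<in>{0..<q}. f (y + x*q))" by (rule sum.shift_bounds_nat_ivl)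
    also have "\<dots> = (\<Sum>y<q. f (x*q + y))" by (simp add: lessThan_atLeast0 add.commute)
    finally show "sum f {x*q..<x*q+q} = (\<Sum>y<q. f (x*q + y))" .
  qed
  finally show ?thesis .
qed

lemma index_div_less: "i < a * (b::nat) \<Longrightarrow> i div b < a"
  by (simp add: less_mult_imp_div_less)

lemma index_mod_less: "i < a * (b::nat) \<Longrightarrow> i mod b < b"
  by (cases "b = 0") simp_all

lemma mult_add_less: "x < p \<Longrightarrow> y < (q::nat) \<Longrightarrow> x*q + y < p*q"
proof -
  assume "x < p" "y < q"
  hence "x*q + y < x*q + q" by simp
  also have "\<dots> = (Suc x) * q" by simp
  also have "\<dots> \<le> p * q" using \<open>x < p\<close> by (intro mult_le_mono1) simp
  finally show ?thesis .
qed

lemma kron_dims[simp]: "dim_row (kron A B) = dim_row A * dim_row B" "dim_col (kron A B) = dim_col A * dim_col B"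
  by (simp_all add: kron_def)

lemma kron_carrier: "A \<in> carrier_mat a a' \<Longrightarrow> B \<in> carrier_mat b b' \<Longrightarrow> kron A B \<in> carrier_mat (a*b) (a'*b')"
  by (rule carrier_matI) (simp_all add: carrier_matD)

lemma kron_index: "i < dim_row A * dim_row B \<Longrightarrow> j < dim_col A * dim_col B \<Longrightarrow>
   kron A B $$ (i,j) = A $$ (i div dim_row B, j div dim_col B) * B $$ (i mod dim_row B, j mod dim_col B)"
  by (simp add: kron_def)

lemma kron_mult:
  assumes A: "A \<in> carrier_mat a p" and B: "B \<in> carrier_mat b q"
    and C: "C \<in> carrier_mat p r" and D: "D \<in> carrier_mat q s"
  shows "kron A B * kron C D = kron (A * C) (B * D)"
proof -
  have Ad: "dim_row A = a" "dim_col A = p" using carrier_matD[OF A] by simp_all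
  have Bd: "dim_row B = b" "dim_col B = q" using carrier_matD[OF B] by simp_all
  have Cd: "dim_row C = p" "dim_col C = r" using carrier_matD[OF C] by simp_all
  have Dd: "dim_row D = q" "dim_col D = s" using carrier_matD[OF D] by simp_all
  show ?thesis
  proof (rule eq_matI)
    fix i j assume "i < dim_row (kron (A * C) (B * D))" "j < dim_col (kron (A * C) (B * D))"
    hence ij: "i < a * b" "j < r * s" using Ad Bd Cd Dd by simp_all
    have KAB: "kron A B \<in> carrier_mat (a*b) (p*q)" by (rule kron_carrier[OF A B])
    have KCD: "kron C D \<in> carrier_mat (p*q) (r*s)" by (rule kron_carrier[OF C D])
    have "(kron A B * kron C D) $$ (i,j) = (\<Sum>l<p*q. kron A B $$ (i,l) * kron C D $$ (l,j))"
      by (rule mult_index_sum[OF KAB KCD ij])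
    also have "\<dots> = (\<Sum>x<p. \<Sum>y<q. kron A B $$ (i,x*q+y) * kron C D $$ (x*q+y,j))"
      by (rule sum_lessThan_mult)
    also have "\<dots> = (\<Sum>x<p. \<Sum>y<q. (A $$ (i div b, x) * C $$ (x, j div s)) * (B $$ (i mod b, y) * D $$ (y, j mod s)))"
    proof (intro sum.cong refl)
      fix x y assume "x \<in> {..<p}" "y \<in> {..<q}"
      hence xy: "x < p" "y < q" by simp_all
      have l: "x*q+y < p*q" by (rule mult_add_less[OF xy])
      show "kron A B $$ (i,x*q+y) * kron C D $$ (x*q+y,j) =
         (A $$ (i div b, x) * C $$ (x, j div s)) * (B $$ (i mod b, y) * D $$ (y, j mod s))"
        using ij l xy Ad Bd Cd Dd by (simp add: kron_index)
    qed
    also have "\<dots> = (\<Sum>x<p. A $$ (i div b, x) * C $$ (x, j div s)) * (\<Sum>y<q. B $$ (i mod b, y) * D $$ (y, j mod s))"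
      by (simp add: sum_product)
    also have "\<dots> = (A * C) $$ (i div b, j div s) * (B * D) $$ (i mod b, j mod s)"
      using ij by (simp add: mult_index_sum[OF A C] mult_index_sum[OF B D] index_div_less index_mod_less)
    also have "\<dots> = kron (A * C) (B * D) $$ (i,j)"
      using ij Ad Bd Cd Dd by (simp add: kron_index)
    finally show "(kron A B * kron C D) $$ (i,j) = kron (A * C) (B * D) $$ (i,j)" .
  qed (simp_all add: Ad Bd Cd Dd)
qed

lemma qadj_kron: "qadj (kron A B) = kron (qadj A) (qadj B)"
  by (rule eq_matI) (simp_all add: kron_index index_div_less index_mod_less)

lemma kron_one: "kron (1\<^sub>m a) (1\<^sub>m b) = (1\<^sub>m (a*b) :: complex mat)"
proof (rule eq_matI)
  fix i j assume "i < dim_row (1\<^sub>m (a*b) :: complex mat)" "j < dim_col (1\<^sub>m (a*b) :: complex mat)"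
  hence ij: "i < a*b" "j < a*b" by simp_all
  have "(i div b = j div b \<and> i mod b = j mod b) = (i = j)"
    by (metis div_mult_mod_eq)
  thus "kron (1\<^sub>m a) (1\<^sub>m b) $$ (i,j) = (1\<^sub>m (a*b) :: complex mat) $$ (i,j)"
    using ij by (auto simp: kron_index index_div_less index_mod_less)
qed simp_all

lemma kron_rdiag: "kron (rdiag a da) (rdiag b db) = rdiag (a*b) (\<lambda>k. da (k div b) * db (k mod b))"
proof (rule eq_matI)
  fix i j assume "i < dim_row (rdiag (a*b) (\<lambda>k. da (k div b) * db (k mod b)))"
     "j < dim_col (rdiag (a*b) (\<lambda>k. da (k div b) * db (k mod b)))"
  hence ij: "i < a*b" "j < a*b" by simp_all
  have "(i div b = j div b \<and> i mod b = j mod b) = (i = j)"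
    by (metis div_mult_mod_eq)
  thus "kron (rdiag a da) (rdiag b db) $$ (i,j) = rdiag (a*b) (\<lambda>k. da (k div b) * db (k mod b)) $$ (i,j)"
    using ij by (auto simp: kron_index index_div_less index_mod_less mat_diag_def)
qed simp_all

lemma unitary_kron: assumes U: "unitary a U" and V: "unitary b V" shows "unitary (a*b) (kron U V)"
proof -
  have Uc: "U \<in> carrier_mat a a" and Vc: "V \<in> carrier_mat b b" using U V by simp_all
  have "qadj (kron U V) * kron U V = kron (qadj U * U) (qadj V * V)"
    unfolding qadj_kron by (rule kron_mult[of "qadj U" a a "qadj V" b b U a V b]) (simp_all add: Uc Vc)
  also have "\<dots> = 1\<^sub>m (a*b)" using unitary_left[OF U] unitary_left[OF V] kron_one by simp
  finally show ?thesis unfolding unitary_def using kron_carrier[OF Uc Vc] by simp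
qed

lemma kron_conj_rdiag:
  assumes U: "unitary a U" and V: "unitary b V"
  shows "kron (U * rdiag a da * qadj U) (V * rdiag b db * qadj V)
     = kron U V * rdiag (a*b) (\<lambda>k. da (k div b) * db (k mod b)) * qadj (kron U V)"
proof -
  have Uc: "U \<in> carrier_mat a a" and Vc: "V \<in> carrier_mat b b" using U V by simp_all
  have qUc: "qadj U \<in> carrier_mat a a" and qVc: "qadj V \<in> carrier_mat b b" using Uc Vc by simp_all
  have UD: "U * rdiag a da \<in> carrier_mat a a" using Uc by (simp add: mult_carrier_mat[of _ a a])
  have VD: "V * rdiag b db \<in> carrier_mat b b" using Vc by (simp add: mult_carrier_mat[of _ b b])
  have "kron (U * rdiag a da * qadj U) (V * rdiag b db * qadj V) = kron (U * rdiag a da) (V * rdiag b db) * kron (qadj U) (qadj V)"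
    by (rule kron_mult[symmetric, OF UD VD qUc qVc])
  also have "kron (U * rdiag a da) (V * rdiag b db) = kron U V * kron (rdiag a da) (rdiag b db)"
    by (rule kron_mult[symmetric, OF Uc Vc mat_diag_dim mat_diag_dim])
  finally show ?thesis by (simp add: kron_rdiag qadj_kron)
qed

lemma mat_fun_kron:
  assumes U: "unitary a U" and V: "unitary b V"
  shows "mat_fun (a*b) f (kron (U * rdiag a da * qadj U) (V * rdiag b db * qadj V))
     = kron U V * rdiag (a*b) (\<lambda>k. f (da (k div b) * db (k mod b))) * qadj (kron U V)"
  by (rule mat_fun_conj_rdiag[OF unitary_kron[OF U V] kron_conj_rdiag[OF U V]])

lemma kron_add_left:
  assumes A: "A \<in> carrier_mat a a'" and B: "B \<in> carrier_mat a a'"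
  shows "kron (A + B) C = kron A C + kron B C"
proof -
  have Ad: "dim_row A = a" "dim_col A = a'" using carrier_matD[OF A] by simp_all
  have Bd: "dim_row B = a" "dim_col B = a'" using carrier_matD[OF B] by simp_all
  show ?thesis
    by (rule eq_matI) (simp_all add: Ad Bd kron_index index_div_less index_mod_less distrib_right)
qed

lemma kron_smult_right: "kron A (c \<cdot>\<^sub>m B) = c \<cdot>\<^sub>m kron A B"
  by (rule eq_matI) (simp_all add: kron_index index_div_less index_mod_less mult_ac)

lemma kron_zero_right: "kron A (0\<^sub>m b b' :: complex mat) = 0\<^sub>m (dim_row A * b) (dim_col A * b')"
  by (rule eq_matI) (simp_all add: kron_index index_div_less index_mod_less)

lemma kron_zero_left: "kron (0\<^sub>m a a' :: complex mat) B = 0\<^sub>m (a * dim_row B) (a' * dim_col B)"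
  by (rule eq_matI) (simp_all add: kron_index index_div_less index_mod_less)

lemma qtr_add: "A \<in> carrier_mat n n \<Longrightarrow> B \<in> carrier_mat n n \<Longrightarrow> qtr (A + B) = qtr A + qtr B"
  using carrier_matD[of A n n] carrier_matD[of B n n]
  by (simp add: qtr_def sum.distrib)

lemma qtr_minus: "A \<in> carrier_mat n n \<Longrightarrow> B \<in> carrier_mat n n \<Longrightarrow> qtr (A - B) = qtr A - qtr B"
  using carrier_matD[of A n n] carrier_matD[of B n n]
  by (simp add: qtr_def sum_subtractf)

lemma qtr_smult: "A \<in> carrier_mat n n \<Longrightarrow> qtr (c \<cdot>\<^sub>m A) = c * qtr A"
  using carrier_matD[of A n n] by (simp add: qtr_def sum_distrib_left)

lemma qtr_comm:
  assumes A: "A \<in> carrier_mat n m" and B: "B \<in> carrier_mat m n"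
  shows "qtr (A * B) = qtr (B * A)"
proof -
  have "qtr (A * B) = (\<Sum>i<n. \<Sum>l<m. A $$ (i,l) * B $$ (l,i))"
    using carrier_matD[OF A] carrier_matD[OF B] mult_index_sum[OF A B]
    by (simp add: qtr_def)
  also have "\<dots> = (\<Sum>l<m. \<Sum>i<n. B $$ (l,i) * A $$ (i,l))"
    by (subst sum.swap) (simp add: mult.commute)
  also have "\<dots> = qtr (B * A)"
    using carrier_matD[OF A] carrier_matD[OF B] mult_index_sum[OF B A]
    by (simp add: qtr_def)
  finally show ?thesis .
qed

lemma qtr_kron:
  assumes A: "A \<in> carrier_mat a a" and B: "B \<in> carrier_mat b b"
  shows "qtr (kron A B) = qtr A * qtr B"
proof -
  have Ad: "dim_row A = a" "dim_col A = a" using carrier_matD[OF A] by simp_all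
  have Bd: "dim_row B = b" "dim_col B = b" using carrier_matD[OF B] by simp_all
  have "qtr (kron A B) = (\<Sum>k<a*b. kron A B $$ (k,k))" using Ad Bd by (simp add: qtr_def)
  also have "\<dots> = (\<Sum>x<a. \<Sum>y<b. kron A B $$ (x*b+y, x*b+y))" by (rule sum_lessThan_mult)
  also have "\<dots> = (\<Sum>x<a. \<Sum>y<b. A $$ (x,x) * B $$ (y,y))"
  proof (intro sum.cong refl)
    fix x y assume "x \<in> {..<a}" "y \<in> {..<b}"
    hence xy: "x < a" "y < b" by simp_all
    have "x*b+y < a*b" by (rule mult_add_less[OF xy])
    thus "kron A B $$ (x*b+y, x*b+y) = A $$ (x,x) * B $$ (y,y)" using xy Ad Bd by (simp add: kron_index)
  qed
  also have "\<dots> = qtr A * qtr B" using Ad Bd by (simp add: qtr_def sum_product)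
  finally show ?thesis .
qed

lemma qtr_mult_add:
  assumes "X \<in> carrier_mat a b" "Y \<in> carrier_mat b a" "Z \<in> carrier_mat b a"
  shows "qtr (X * (Y + Z)) = qtr (X * Y) + qtr (X * Z)"
  using assms by (simp add: mult_add_distrib_mat[OF assms] qtr_add[of _ a] mult_carrier_mat[of _ a b])

lemma qtr_mult_minus:
  assumes "X \<in> carrier_mat a b" "Y \<in> carrier_mat b a" "Z \<in> carrier_mat b a"
  shows "qtr (X * (Y - Z)) = qtr (X * Y) - qtr (X * Z)"
  using assms by (simp add: mult_minus_distrib_mat[OF assms] qtr_minus[of _ a] mult_carrier_mat[of _ a b])

lemma qtr_mult_smult:
  assumes "X \<in> carrier_mat a b" "Y \<in> carrier_mat b a"
  shows "qtr (X * (c \<cdot>\<^sub>m Y)) = c * qtr (X * Y)"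
  using assms by (simp add: mult_smult_distrib[OF assms] qtr_smult[of _ a] mult_carrier_mat[of _ a b])

lemma qtr_kron_mult:
  assumes A: "A \<in> carrier_mat a a" and B: "B \<in> carrier_mat b b"
    and C: "C \<in> carrier_mat a a" and D: "D \<in> carrier_mat b b"
  shows "qtr (kron A B * kron C D) = qtr (A * C) * qtr (B * D)"
  by (simp add: kron_mult[OF A B C D] qtr_kron[of _ a _ b] mult_carrier_mat[of _ a a] mult_carrier_mat[of _ b b] A B C D)

lemma ptr2_dims[simp]: "dim_row (ptr2 k m X) = k" "dim_col (ptr2 k m X) = k"
  by (simp_all add: ptr2_def)

lemma ptr2_carrier: "ptr2 k m X \<in> carrier_mat k k"
  by (rule carrier_matI) simp_all

lemma ptr2_index: "i < k \<Longrightarrow> j < k \<Longrightarrow> ptr2 k m X $$ (i,j) = (\<Sum>a<m. X $$ (i*m + a, j*m + a))"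
  by (simp add: ptr2_def)

lemma blk_dims[simp]: "dim_row (blk m X i j) = m" "dim_col (blk m X i j) = m"
  by (simp_all add: blk_def)

lemma blk_carrier: "blk m X i j \<in> carrier_mat m m"
  by (rule carrier_matI) simp_all

lemma qtr_blk: "qtr (blk m X i j) = (\<Sum>a<m. X $$ (i*m + a, j*m + a))"
  by (simp add: qtr_def blk_def)

lemma id_tensor_dims[simp]: "dim_row (id_tensor k m n N X) = k*n" "dim_col (id_tensor k m n N X) = k*n"
  by (simp_all add: id_tensor_def)

lemma id_tensor_carrier: "id_tensor k m n N X \<in> carrier_mat (k*n) (k*n)"
  by (rule carrier_matI) simp_all

lemma id_tensor_index: "r < k*n \<Longrightarrow> c < k*n \<Longrightarrow>
  id_tensor k m n N X $$ (r,c) = N (blk m X (r div n) (c div n)) $$ (r mod n, c mod n)"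
  by (simp add: id_tensor_def)

lemma id_tensor_replacer:
  assumes w: "\<omega> \<in> carrier_mat n n"
  shows "id_tensor k m n (replacer \<omega>) X = kron (ptr2 k m X) \<omega>"
proof -
  have wd: "dim_row \<omega> = n" "dim_col \<omega> = n" using carrier_matD[OF w] by simp_all
  show ?thesis
  proof (rule eq_matI)
    fix r c assume "r < dim_row (kron (ptr2 k m X) \<omega>)" "c < dim_col (kron (ptr2 k m X) \<omega>)"
    hence rc: "r < k*n" "c < k*n" using wd by simp_all
    show "id_tensor k m n (replacer \<omega>) X $$ (r,c) = kron (ptr2 k m X) \<omega> $$ (r,c)"
      using rc wd by (simp add: id_tensor_index kron_index replacer_def qtr_blk ptr2_index
          index_div_less index_mod_less)
  qed (simp_all add: wd)
qed

lemma channel_carrier: "channel m n N \<Longrightarrow> X \<in> carrier_mat m m \<Longrightarrow> N X \<in> carrier_mat n n"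
  unfolding channel_def by blast

lemma channel_tr: "channel m n N \<Longrightarrow> X \<in> carrier_mat m m \<Longrightarrow> qtr (N X) = qtr X"
  unfolding channel_def by blast

lemma channel_cp: "channel m n N \<Longrightarrow> psd (k*m) X \<Longrightarrow> psd (k*n) (id_tensor k m n N X)"
  unfolding channel_def by blast

lemma ptr2_id_tensor_channel:
  assumes N: "channel m n N"
  shows "ptr2 k n (id_tensor k m n N X) = ptr2 k m X"
proof (rule eq_matI)
  fix i j assume "i < dim_row (ptr2 k m X)" "j < dim_col (ptr2 k m X)"
  hence ij: "i < k" "j < k" by simp_all
  have Nc: "N (blk m X i j) \<in> carrier_mat n n" by (rule channel_carrier[OF N blk_carrier])
  have "ptr2 k n (id_tensor k m n N X) $$ (i,j) = (\<Sum>a<n. id_tensor k m n N X $$ (i*n+a, j*n+a))"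
    using ij by (simp add: ptr2_index)
  also have "\<dots> = (\<Sum>a<n. N (blk m X i j) $$ (a,a))"
  proof (intro sum.cong refl)
    fix a assume "a \<in> {..<n}" hence a: "a < n" by simp
    have "i*n+a < k*n" "j*n+a < k*n" using mult_add_less[OF ij(1) a] mult_add_less[OF ij(2) a] by simp_all
    thus "id_tensor k m n N X $$ (i*n+a, j*n+a) = N (blk m X i j) $$ (a,a)"
      using a by (simp add: id_tensor_index)
  qed
  also have "\<dots> = qtr (N (blk m X i j))" using carrier_matD[OF Nc] by (simp add: qtr_def)
  also have "\<dots> = qtr (blk m X i j)" by (rule channel_tr[OF N blk_carrier])
  also have "\<dots> = ptr2 k m X $$ (i,j)" using ij by (simp add: qtr_blk ptr2_index)
  finally show "ptr2 k n (id_tensor k m n N X) $$ (i,j) = ptr2 k m X $$ (i,j)" .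
qed simp_all

lemma qtr_kron_one_mult:
  assumes X: "X \<in> carrier_mat (k*n) (k*n)" and H: "H \<in> carrier_mat k k"
  shows "qtr (kron H (1\<^sub>m n) * X) = qtr (H * ptr2 k n X)"
proof -
  have Xd: "dim_row X = k*n" "dim_col X = k*n" using carrier_matD[OF X] by simp_all
  have Hd: "dim_row H = k" "dim_col H = k" using carrier_matD[OF H] by simp_all
  have K: "kron H (1\<^sub>m n) \<in> carrier_mat (k*n) (k*n)" using kron_carrier[OF H one_carrier_mat] .
  have "qtr (kron H (1\<^sub>m n) * X) = (\<Sum>r<k*n. \<Sum>s<k*n. kron H (1\<^sub>m n) $$ (r,s) * X $$ (s,r))"
    using Hd Xd mult_index_sum[OF K X] by (simp add: qtr_def)
  also have "\<dots> = (\<Sum>i<k. \<Sum>a<n. \<Sum>j<k. \<Sum>b<n. kron H (1\<^sub>m n) $$ (i*n+a, j*n+b) * X $$ (j*n+b, i*n+a))"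
    by (simp add: sum_lessThan_mult)
  also have "\<dots> = (\<Sum>i<k. \<Sum>a<n. \<Sum>j<k. \<Sum>b<n. (if a = b then H $$ (i,j) * X $$ (j*n+b, i*n+a) else 0))"
  proof (intro sum.cong refl)
    fix i a j b assume "i \<in> {..<k}" "a \<in> {..<n}" "j \<in> {..<k}" "b \<in> {..<n}"
    hence v: "i < k" "a < n" "j < k" "b < n" by simp_all
    have "i*n+a < k*n" "j*n+b < k*n" using mult_add_less[OF v(1,2)] mult_add_less[OF v(3,4)] by simp_all
    thus "kron H (1\<^sub>m n) $$ (i*n+a, j*n+b) * X $$ (j*n+b, i*n+a) = (if a = b then H $$ (i,j) * X $$ (j*n+b, i*n+a) else 0)"
      using v Hd by (simp add: kron_index)
  qed
  also have "\<dots> = (\<Sum>i<k. \<Sum>j<k. H $$ (i,j) * (\<Sum>a<n. X $$ (j*n+a, i*n+a)))"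
    by (simp add: sum.swap[of _ "{..<n}" "{..<k}"] sum_distrib_left)
  also have "\<dots> = (\<Sum>i<k. \<Sum>j<k. H $$ (i,j) * ptr2 k n X $$ (j,i))"
    by (intro sum.cong refl) (simp add: ptr2_index)
  also have "\<dots> = qtr (H * ptr2 k n X)"
    using Hd mult_index_sum[OF H ptr2_carrier] by (simp add: qtr_def)
  finally show ?thesis .
qed

lemma ptr2_kron:
  assumes A: "A \<in> carrier_mat k k" and B: "B \<in> carrier_mat n n"
  shows "ptr2 k n (kron A B) = qtr B \<cdot>\<^sub>m A"
proof (rule eq_matI)
  have Ad: "dim_row A = k" "dim_col A = k" using carrier_matD[OF A] by simp_all
  have Bd: "dim_row B = n" "dim_col B = n" using carrier_matD[OF B] by simp_all
  fix i j assume "i < dim_row (qtr B \<cdot>\<^sub>m A)" "j < dim_col (qtr B \<cdot>\<^sub>m A)"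
  hence ij: "i < k" "j < k" using Ad by simp_all
  have "ptr2 k n (kron A B) $$ (i,j) = (\<Sum>a<n. kron A B $$ (i*n+a, j*n+a))" using ij by (simp add: ptr2_index)
  also have "\<dots> = (\<Sum>a<n. A $$ (i,j) * B $$ (a,a))"
  proof (intro sum.cong refl)
    fix a assume "a \<in> {..<n}" hence a: "a < n" by simp
    have "i*n+a < k*n" "j*n+a < k*n" using mult_add_less[OF ij(1) a] mult_add_less[OF ij(2) a] by simp_all
    thus "kron A B $$ (i*n+a, j*n+a) = A $$ (i,j) * B $$ (a,a)" using a Ad Bd by (simp add: kron_index)
  qed
  also have "\<dots> = (qtr B \<cdot>\<^sub>m A) $$ (i,j)" using ij Ad Bd by (simp add: qtr_def sum_distrib_left mult.commute)
  finally show "ptr2 k n (kron A B) $$ (i,j) = (qtr B \<cdot>\<^sub>m A) $$ (i,j)" .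
qed (simp_all add: carrier_matD[OF A])

lemma qtr_ptr2:
  assumes X: "X \<in> carrier_mat (k*m) (k*m)"
  shows "qtr (ptr2 k m X) = qtr X"
proof -
  have Xd: "dim_row X = k*m" using carrier_matD[OF X] by simp
  have "qtr X = (\<Sum>i<k. \<Sum>a<m. X $$ (i*m+a, i*m+a))" using Xd by (simp add: qtr_def sum_lessThan_mult)
  thus ?thesis by (simp add: qtr_def ptr2_index)
qed

lemma energy_noninteracting_diff:
  assumes X: "X \<in> carrier_mat (m*n) (m*n)" and HR: "H_R \<in> carrier_mat m m" and H: "H \<in> carrier_mat n n"
  shows "energy (kron H_R (1\<^sub>m n) + kron (1\<^sub>m m) H) X - energy H_R (ptr2 m n X)
     = Re (qtr (X * kron (1\<^sub>m m) H))"
proof -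
  have K1: "kron H_R (1\<^sub>m n) \<in> carrier_mat (m*n) (m*n)" by (rule kron_carrier[OF HR one_carrier_mat])
  have K2: "kron (1\<^sub>m m) H \<in> carrier_mat (m*n) (m*n)" by (rule kron_carrier[OF one_carrier_mat H])
  have "qtr ((kron H_R (1\<^sub>m n) + kron (1\<^sub>m m) H) * X) = qtr (kron H_R (1\<^sub>m n) * X) + qtr (kron (1\<^sub>m m) H * X)"
    by (simp add: add_mult_distrib_mat[OF K1 K2 X] qtr_add[of _ "m*n"] mult_carrier_mat[of _ "m*n" "m*n"] K1 K2 X)
  also have "qtr (kron H_R (1\<^sub>m n) * X) = qtr (H_R * ptr2 m n X)" by (rule qtr_kron_one_mult[OF X HR])
  also have "qtr (kron (1\<^sub>m m) H * X) = qtr (X * kron (1\<^sub>m m) H)" by (rule qtr_comm[OF K2 X])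
  finally show ?thesis unfolding energy_def by simp
qed

section \<open>Positivity\<close>

lemma quadratic_form_sum:
  assumes X: "X \<in> carrier_mat N N" and w: "w \<in> carrier_vec N"
  shows "(X *\<^sub>v w) \<bullet>c w = (\<Sum>r<N. \<Sum>s<N. X $$ (r,s) * w $ s * cnj (w $ r))"
proof -
  have Xd: "dim_row X = N" "dim_col X = N" using carrier_matD[OF X] by simp_all
  have wd: "dim_vec w = N" using carrier_vecD[OF w] .
  have "(X *\<^sub>v w) \<bullet>c w = (\<Sum>r<N. (X *\<^sub>v w) $ r * cnj (w $ r))"
    unfolding scalar_prod_def using wd by (simp add: lessThan_atLeast0)
  also have "\<dots> = (\<Sum>r<N. (\<Sum>s<N. X $$ (r,s) * w $ s) * cnj (w $ r))"
  proof (intro sum.cong refl)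
    fix r assume "r \<in> {..<N}" hence r: "r < N" by simp
    have "(X *\<^sub>v w) $ r = row X r \<bullet> w" using r Xd by simp
    also have "\<dots> = (\<Sum>s<N. X $$ (r,s) * w $ s)"
      unfolding scalar_prod_def using wd r Xd by (simp add: lessThan_atLeast0)
    finally show "(X *\<^sub>v w) $ r * cnj (w $ r) = (\<Sum>s<N. X $$ (r,s) * w $ s) * cnj (w $ r)" by simp
  qed
  also have "\<dots> = (\<Sum>r<N. \<Sum>s<N. X $$ (r,s) * w $ s * cnj (w $ r))"
    by (simp add: sum_distrib_right)
  finally show ?thesis .
qed

lemma psd_carrier: "psd n A \<Longrightarrow> A \<in> carrier_mat n n"
  by (simp add: psd_def hermitian_def)

lemma psd_herm: "psd n A \<Longrightarrow> qadj A = A"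
  by (simp add: psd_def hermitian_def)

lemma psd_quad: "psd n A \<Longrightarrow> v \<in> carrier_vec n \<Longrightarrow> 0 \<le> Re ((A *\<^sub>v v) \<bullet>c v)"
  by (simp add: psd_def)

lemma psd_eigenvalue_nonneg:
  assumes A: "psd n A" and U: "unitary n U" and eq: "A = U * rdiag n d * qadj U" and i: "i < n"
  shows "0 \<le> d i"
proof -
  have Ac: "A \<in> carrier_mat n n" by (rule psd_carrier[OF A])
  have Uc: "U \<in> carrier_mat n n" using U by simp
  have qUc: "qadj U \<in> carrier_mat n n" using Uc by simp
  have Ud: "dim_row U = n" "dim_col U = n" using carrier_matD[OF Uc] by simp_all
  note sq = assoc_mult_mat[of _ n n _ n _ n] mult_carrier_mat[of _ n n]
    right_mult_one_mat[of _ n n] left_mult_one_mat[of _ n n]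
  define v where "v = col U i"
  have vc: "v \<in> carrier_vec n" unfolding v_def using Ud by (intro carrier_vecI) simp
  have AU: "A * U = U * rdiag n d"
  proof -
    have "A * U = U * rdiag n d * (qadj U * U)" unfolding eq using Uc qUc by (simp add: sq)
    thus ?thesis using unitary_left[OF U] Uc by (simp add: sq)
  qed
  have Av: "(A *\<^sub>v v) $ l = U $$ (l,i) * d i" if "l < n" for l
  proof -
    have "A *\<^sub>v v = col (A * U) i" unfolding v_def using col_mult2[OF Ac Uc i] by simp
    hence "(A *\<^sub>v v) $ l = (U * rdiag n d) $$ (l,i)" using that i Ud AU by simp
    thus ?thesis using mult_rdiag_index[OF Uc that i] by simp
  qed
  have "(A *\<^sub>v v) \<bullet>c v = (\<Sum>l<n. (A *\<^sub>v v) $ l * cnj (v $ l))"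
    unfolding scalar_prod_def using carrier_vecD[OF vc] by (simp add: lessThan_atLeast0)
  also have "\<dots> = (\<Sum>l<n. d i * (cnj (U $$ (l,i)) * U $$ (l,i)))"
    using Av Ud i by (intro sum.cong refl) (simp add: v_def)
  also have "\<dots> = d i * (qadj U * U) $$ (i,i)"
    by (simp add: qadj_mult_index[OF Uc i i] sum_distrib_left)
  also have "\<dots> = d i" using unitary_left[OF U] i by simp
  finally have "Re ((A *\<^sub>v v) \<bullet>c v) = d i" by simp
  thus ?thesis using psd_quad[OF A vc] by simp
qed

lemma ptr2_herm:
  assumes X: "X \<in> carrier_mat (k*m) (k*m)" and h: "qadj X = X"
  shows "qadj (ptr2 k m X) = ptr2 k m X"
proof (rule eq_matI)
  have Xd: "dim_row X = k*m" "dim_col X = k*m" using carrier_matD[OF X] by simp_all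
  fix i j assume "i < dim_row (ptr2 k m X)" "j < dim_col (ptr2 k m X)"
  hence ij: "i < k" "j < k" by simp_all
  have "qadj (ptr2 k m X) $$ (i,j) = (\<Sum>a<m. cnj (X $$ (j*m+a, i*m+a)))"
    using ij by (simp add: ptr2_index)
  also have "\<dots> = (\<Sum>a<m. X $$ (i*m+a, j*m+a))"
  proof (intro sum.cong refl)
    fix a assume "a \<in> {..<m}" hence a: "a < m" by simp
    have l: "i*m+a < k*m" "j*m+a < k*m" using mult_add_less[OF ij(1) a] mult_add_less[OF ij(2) a] by simp_all
    have "X $$ (i*m+a, j*m+a) = qadj X $$ (i*m+a, j*m+a)" using h by simp
    also have "\<dots> = cnj (X $$ (j*m+a, i*m+a))" using l Xd by simp
    finally show "cnj (X $$ (j*m+a, i*m+a)) = X $$ (i*m+a, j*m+a)" by simp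
  qed
  also have "\<dots> = ptr2 k m X $$ (i,j)" using ij by (simp add: ptr2_index)
  finally show "qadj (ptr2 k m X) $$ (i,j) = ptr2 k m X $$ (i,j)" .
qed simp_all

lemma sum_collapse_diagonal:
  fixes T :: "nat \<Rightarrow> nat \<Rightarrow> complex" and a m k :: nat
  assumes a: "a < m"
  shows "(\<Sum>i<k. \<Sum>b<m. \<Sum>j<k. \<Sum>c<m. (if b = a then (if c = a then T i j else 0) else 0)) = (\<Sum>i<k. \<Sum>j<k. T i j)"
proof (rule sum.cong[OF refl])
  fix i
  have "(\<Sum>b<m. \<Sum>j<k. \<Sum>c<m. (if b = a then (if c = a then T i j else 0) else 0))
      = (\<Sum>b<m. if b = a then (\<Sum>j<k. \<Sum>c<m. if c = a then T i j else 0) else 0)"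
    by (rule sum.cong[OF refl]) (case_tac "x = a", simp_all)
  also have "\<dots> = (\<Sum>j<k. \<Sum>c<m. if c = a then T i j else 0)"
    using a by simp
  also have "\<dots> = (\<Sum>j<k. T i j)"
    using a by (simp add: sum.delta)
  finally show "(\<Sum>b<m. \<Sum>j<k. \<Sum>c<m. (if b = a then (if c = a then T i j else 0) else 0)) = (\<Sum>j<k. T i j)" .
qed

definition kron_unit_vec :: "nat \<Rightarrow> nat \<Rightarrow> complex vec \<Rightarrow> complex vec" where
  "kron_unit_vec m a v = vec (dim_vec v * m) (\<lambda>r. if r mod m = a then v $ (r div m) else 0)"

lemma quadratic_form_ptr2:
  assumes X: "X \<in> carrier_mat (k*m) (k*m)" and v: "v \<in> carrier_vec k"
  shows "(ptr2 k m X *\<^sub>v v) \<bullet>c v = (\<Sum>a<m. (X *\<^sub>v kron_unit_vec m a v) \<bullet>c kron_unit_vec m a v)"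
proof -
  let ?w = "\<lambda>a. kron_unit_vec m a v"
  have wc: "?w a \<in> carrier_vec (k*m)" for a using v by (simp add: kron_unit_vec_def)
  have widx: "?w a $ (i*m + b) = (if b = a then v $ i else 0)" if "i < k" "b < m" for a i b
    using mult_add_less[OF that] that v by (simp add: kron_unit_vec_def)
  have qa: "(X *\<^sub>v ?w a) \<bullet>c ?w a = (\<Sum>i<k. \<Sum>j<k. X $$ (i*m+a, j*m+a) * v $ j * cnj (v $ i))"
    if a: "a < m" for a
  proof -
    have "(X *\<^sub>v ?w a) \<bullet>c ?w a
        = (\<Sum>i<k. \<Sum>b<m. \<Sum>j<k. \<Sum>c<m. X $$ (i*m+b, j*m+c) * ?w a $ (j*m+c) * cnj (?w a $ (i*m+b)))"
      by (simp add: quadratic_form_sum[OF X wc] sum_lessThan_mult)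
    also have "\<dots> = (\<Sum>i<k. \<Sum>b<m. \<Sum>j<k. \<Sum>c<m.
        (if b = a then (if c = a then X $$ (i*m+a, j*m+a) * v $ j * cnj (v $ i) else 0) else 0))"
      by (intro sum.cong refl) (simp add: widx)
    finally show ?thesis unfolding sum_collapse_diagonal[OF a] .
  qed
  have "(ptr2 k m X *\<^sub>v v) \<bullet>c v = (\<Sum>i<k. \<Sum>j<k. \<Sum>a<m. X $$ (i*m+a, j*m+a) * v $ j * cnj (v $ i))"
    by (simp add: quadratic_form_sum[OF ptr2_carrier v] ptr2_index sum_distrib_right)
  also have "\<dots> = (\<Sum>a<m. \<Sum>i<k. \<Sum>j<k. X $$ (i*m+a, j*m+a) * v $ j * cnj (v $ i))"
    by (subst sum.swap) (simp add: sum.swap[of _ "{..<k}" "{..<m}"])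
  also have "\<dots> = (\<Sum>a<m. (X *\<^sub>v ?w a) \<bullet>c ?w a)"
    by (rule sum.cong[OF refl]) (simp add: qa)
  finally show ?thesis .
qed

lemma ptr2_psd:
  assumes X: "psd (k*m) X"
  shows "psd k (ptr2 k m X)"
proof -
  have Xc: "X \<in> carrier_mat (k*m) (k*m)" by (rule psd_carrier[OF X])
  have "hermitian k (ptr2 k m X)"
    unfolding hermitian_def using ptr2_carrier ptr2_herm[OF Xc psd_herm[OF X]] by simp
  moreover have "0 \<le> Re ((ptr2 k m X *\<^sub>v v) \<bullet>c v)" if v: "v \<in> carrier_vec k" for v
    unfolding quadratic_form_ptr2[OF Xc v] Re_sum
    using psd_quad[OF X] v by (intro sum_nonneg) (simp add: kron_unit_vec_def)
  ultimately show ?thesis unfolding psd_def by blast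
qed

lemma density_exists:
  assumes "0 < N"
  shows "\<exists>\<psi>. density N \<psi>"
proof -
  define P :: "complex mat" where "P = mat N N (\<lambda>(i,j). if i = 0 \<and> j = 0 then 1 else 0)"
  have Pc: "P \<in> carrier_mat N N" unfolding P_def by simp
  have herm: "hermitian N P" unfolding hermitian_def
    using Pc by (simp add: P_def) (rule eq_matI, simp_all)
  have "0 \<le> Re ((P *\<^sub>v v) \<bullet>c v)" if v: "v \<in> carrier_vec N" for v
  proof -
    have "(P *\<^sub>v v) \<bullet>c v = (\<Sum>r<N. \<Sum>s<N. P $$ (r,s) * v $ s * cnj (v $ r))"
      by (rule quadratic_form_sum[OF Pc v])
    also have "\<dots> = (\<Sum>r<N. \<Sum>s<N. (if r = 0 then (if s = 0 then v $ 0 * cnj (v $ 0) else 0) else 0))"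
      by (intro sum.cong refl) (simp add: P_def)
    also have "\<dots> = v $ 0 * cnj (v $ 0)" using assms by (simp add: sum.If_cases)
    finally show ?thesis by (simp add: complex_mult_cnj)
  qed
  moreover have "qtr P = 1" using assms by (simp add: qtr_def P_def sum.If_cases)
  ultimately have "density N P" unfolding density_def psd_def using herm by blast
  thus ?thesis by blast
qed

section \<open>Logarithms and relative entropies of product operators\<close>

text \<open>As heaviside 0 = 0, mat_fun n heaviside A is the projection onto the support of a
  positive semidefinite A.\<close>

definition heaviside :: "real \<Rightarrow> real" where
  "heaviside x = (if 0 < x then 1 else 0)"

lemma lnp_mult: "0 \<le> y \<Longrightarrow> lnp (x * y) = lnp x * heaviside y + heaviside x * lnp y"
  by (cases "0 < x"; cases "0 < y")
    (simp_all add: lnp_def heaviside_def ln_mult zero_less_mult_iff)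

lemma mat_fun_carrier: "hermitian n A \<Longrightarrow> mat_fun n f A \<in> carrier_mat n n"
  by (metis conj_rdiag_carrier hermitian_decomp mat_fun_conj_rdiag unitary_carrier)

lemma mat_fun_one: "mat_fun n f (1\<^sub>m n) = rdiag n (\<lambda>k. f 1)"
proof -
  have "1\<^sub>m n = 1\<^sub>m n * rdiag n (\<lambda>k. 1) * qadj (1\<^sub>m n)" by simp
  from mat_fun_conj_rdiag[OF unitary_one this] show ?thesis by simp
qed

lemma mat_diag_zero: "mat_diag n (\<lambda>k. 0) = 0\<^sub>m n n"
  by (rule eq_matI) (simp_all add: mat_diag_def)

lemma mat_fun_lnp_kron:
  assumes U: "unitary a U" and V: "unitary b V" and e: "\<And>j. j < b \<Longrightarrow> 0 \<le> e j"
    and A: "A = U * rdiag a d * qadj U" and B: "B = V * rdiag b e * qadj V"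
  shows "mat_fun (a*b) lnp (kron A B)
    = kron (mat_fun a lnp A) (mat_fun b heaviside B) + kron (mat_fun a heaviside A) (mat_fun b lnp B)"
proof -
  have K: "kron U V \<in> carrier_mat (a*b) (a*b)" using unitary_kron[OF U V] by simp
  have "kron (mat_fun a lnp A) (mat_fun b heaviside B) + kron (mat_fun a heaviside A) (mat_fun b lnp B)
    = kron U V * rdiag (a*b) (\<lambda>k. lnp (d (k div b)) * heaviside (e (k mod b))) * qadj (kron U V)
      + kron U V * rdiag (a*b) (\<lambda>k. heaviside (d (k div b)) * lnp (e (k mod b))) * qadj (kron U V)"
    by (simp add: mat_fun_conj_rdiag[OF U A] mat_fun_conj_rdiag[OF V B] kron_conj_rdiag[OF U V])
  also have "\<dots> = kron U V * rdiag (a*b) (\<lambda>k. lnp (d (k div b) * e (k mod b))) * qadj (kron U V)"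
    unfolding conj_rdiag_add[OF K]
    by (intro arg_cong[where f = "\<lambda>x. kron U V * x * qadj (kron U V)"] rdiag_cong)
      (simp add: lnp_mult[OF e] index_mod_less)
  finally show ?thesis unfolding A B by (simp add: mat_fun_kron[OF U V])
qed

lemma gibbs_conj_rdiag:
  "unitary n V \<Longrightarrow> H = V * rdiag n h * qadj V \<Longrightarrow>
    gibbs n \<beta> H = V * rdiag n (\<lambda>k. exp (- \<beta> * h k)) * qadj V"
  unfolding gibbs_def by (rule mat_fun_conj_rdiag)

lemma gibbs_carrier: "hermitian n H \<Longrightarrow> gibbs n \<beta> H \<in> carrier_mat n n"
  unfolding gibbs_def by (rule mat_fun_carrier)

lemma gibbs_inverse:
  assumes "hermitian n H"
  shows "gibbs n (- \<beta>) H * gibbs n \<beta> H = 1\<^sub>m n"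
proof -
  obtain V h where V: "unitary n V" and H: "H = V * rdiag n h * qadj V"
    using hermitian_decomp[OF assms] .
  have "gibbs n (- \<beta>) H * gibbs n \<beta> H = V * rdiag n (\<lambda>k. exp (\<beta> * h k) * exp (- \<beta> * h k)) * qadj V"
    unfolding gibbs_conj_rdiag[OF V H] by (simp add: conj_rdiag_mult[OF V])
  also have "\<dots> = V * rdiag n (\<lambda>k. 1) * qadj V" by (simp flip: exp_add)
  also have "\<dots> = 1\<^sub>m n" by (rule conj_rdiag_one[OF V])
  finally show ?thesis .
qed

lemma mat_fun_lnp_gibbs:
  assumes "hermitian n H"
  shows "mat_fun n lnp (gibbs n \<beta> H) = complex_of_real (- \<beta>) \<cdot>\<^sub>m H"
proof -
  obtain V h where V: "unitary n V" and H: "H = V * rdiag n h * qadj V"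
    using hermitian_decomp[OF assms] .
  have "mat_fun n lnp (gibbs n \<beta> H) = V * rdiag n (\<lambda>k. (- \<beta>) * h k) * qadj V"
    unfolding mat_fun_conj_rdiag[OF V gibbs_conj_rdiag[OF V H]] by (simp add: lnp_def)
  also have "\<dots> = complex_of_real (- \<beta>) \<cdot>\<^sub>m H"
    unfolding H by (rule conj_rdiag_smult[OF unitary_carrier[OF V], symmetric])
  finally show ?thesis .
qed

lemma mat_fun_heaviside_gibbs:
  assumes "hermitian n H"
  shows "mat_fun n heaviside (gibbs n \<beta> H) = 1\<^sub>m n"
proof -
  obtain V h where V: "unitary n V" and H: "H = V * rdiag n h * qadj V"
    using hermitian_decomp[OF assms] .
  have "mat_fun n heaviside (gibbs n \<beta> H) = V * rdiag n (\<lambda>k. 1) * qadj V"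
    unfolding mat_fun_conj_rdiag[OF V gibbs_conj_rdiag[OF V H]] by (simp add: heaviside_def)
  thus ?thesis by (simp only: conj_rdiag_one[OF V])
qed

lemma mat_fun_lnp_kron_one:
  assumes "hermitian m R"
  shows "mat_fun (m*n) lnp (kron R (1\<^sub>m n)) = kron (mat_fun m lnp R) (1\<^sub>m n)"
proof -
  obtain U d where U: "unitary m U" and R: "R = U * rdiag m d * qadj U"
    using hermitian_decomp[OF assms] .
  have one: "1\<^sub>m n = 1\<^sub>m n * rdiag n (\<lambda>k. 1) * qadj (1\<^sub>m n)" by simp
  have "mat_fun (m*n) lnp (kron R (1\<^sub>m n))
    = kron (mat_fun m lnp R) (1\<^sub>m n) + kron (mat_fun m heaviside R) (0\<^sub>m n n)"
    using mat_fun_lnp_kron[OF U unitary_one _ R one]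
    by (simp add: mat_fun_one heaviside_def lnp_def mat_diag_zero)
  moreover have "kron (mat_fun m lnp R) (1\<^sub>m n) \<in> carrier_mat (m*n) (m*n)"
    by (rule kron_carrier[OF mat_fun_carrier[OF assms] one_carrier_mat])
  ultimately show ?thesis by (simp add: kron_zero_right carrier_matD[OF mat_fun_carrier[OF assms]])
qed

lemma mat_fun_lnp_kron_gibbs:
  assumes "hermitian m R" and "hermitian n H"
  shows "mat_fun (m*n) lnp (kron R (gibbs n \<beta> H))
    = kron (mat_fun m lnp R) (1\<^sub>m n) + kron (mat_fun m heaviside R) (complex_of_real (- \<beta>) \<cdot>\<^sub>m H)"
proof -
  obtain U d where U: "unitary m U" and R: "R = U * rdiag m d * qadj U"
    using hermitian_decomp[OF assms(1)] .
  obtain V h where V: "unitary n V" and H: "H = V * rdiag n h * qadj V"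
    using hermitian_decomp[OF assms(2)] .
  show ?thesis
    using mat_fun_lnp_kron[OF U V _ R gibbs_conj_rdiag[OF V H]]
    by (simp add: mat_fun_lnp_gibbs[OF assms(2)] mat_fun_heaviside_gibbs[OF assms(2)])
qed

abbreviation supp_subset :: "nat \<Rightarrow> complex mat \<Rightarrow> complex mat \<Rightarrow> bool" where
  "supp_subset N \<rho> \<sigma> \<equiv> \<forall>v \<in> carrier_vec N. \<sigma> *\<^sub>v v = 0\<^sub>v N \<longrightarrow> \<rho> *\<^sub>v v = 0\<^sub>v N"

lemma mult_mat_zero_vec:
  assumes A: "(A :: complex mat) \<in> carrier_mat r c"
  shows "A *\<^sub>v 0\<^sub>v c = 0\<^sub>v r"
proof (rule eq_vecI)
  fix i assume "i < dim_vec (0\<^sub>v r :: complex vec)"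
  hence "i < r" by simp
  moreover have "row A i \<in> carrier_vec c" using A by (intro carrier_vecI) simp
  ultimately show "(A *\<^sub>v 0\<^sub>v c) $ i = 0\<^sub>v r $ i" using A by simp
qed (use A in simp)

lemma supp_subset_mult_left:
  assumes B: "B \<in> carrier_mat N N" and \<sigma>: "\<sigma> \<in> carrier_mat N N"
  shows "supp_subset N (B * \<sigma>) \<sigma>"
proof (intro ballI impI)
  fix v assume v: "v \<in> carrier_vec N" and "\<sigma> *\<^sub>v v = 0\<^sub>v N"
  hence "(B * \<sigma>) *\<^sub>v v = B *\<^sub>v 0\<^sub>v N" using assoc_mult_mat_vec[OF B \<sigma> v] by simp
  thus "(B * \<sigma>) *\<^sub>v v = 0\<^sub>v N" using mult_mat_zero_vec[OF B] by simp
qed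

lemma supp_subset_kron_gibbs_iff:
  assumes R: "R \<in> carrier_mat m m" and H: "hermitian n H"
  shows "supp_subset (m*n) \<rho> (kron R (gibbs n \<beta> H)) \<longleftrightarrow> supp_subset (m*n) \<rho> (kron R (1\<^sub>m n))"
proof -
  have G: "gibbs n b H \<in> carrier_mat n n" for b by (rule gibbs_carrier[OF H])
  have K: "kron (1\<^sub>m m) (gibbs n b H) \<in> carrier_mat (m*n) (m*n)" for b
    by (rule kron_carrier[OF one_carrier_mat G])
  have "kron (1\<^sub>m m) (gibbs n b H) * kron R (gibbs n b' H) = kron R (gibbs n b H * gibbs n b' H)" for b b'
    using kron_mult[OF one_carrier_mat G R G] R by simp
  hence "kron R (gibbs n \<beta> H) = kron (1\<^sub>m m) (gibbs n \<beta> H) * kron R (1\<^sub>m n)"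
    and "kron R (1\<^sub>m n) = kron (1\<^sub>m m) (gibbs n (- \<beta>) H) * kron R (gibbs n \<beta> H)"
    using kron_mult[OF one_carrier_mat G R one_carrier_mat] R G[of \<beta>] gibbs_inverse[OF H, of \<beta>]
    by simp_all
  thus ?thesis
    using supp_subset_mult_left[OF K kron_carrier[OF R one_carrier_mat]]
      supp_subset_mult_left[OF K kron_carrier[OF R G]] by metis
qed

lemma mult_zero_of_supp_subset:
  fixes R S Y :: "complex mat"
  assumes R: "R \<in> carrier_mat N N" and S: "S \<in> carrier_mat N N" and Y: "Y \<in> carrier_mat N c"
    and supp: "supp_subset N R S" and SY: "S * Y = 0\<^sub>m N c"
  shows "R * Y = 0\<^sub>m N c"
proof (rule eq_matI)
  fix i j assume "i < dim_row (0\<^sub>m N c :: complex mat)" "j < dim_col (0\<^sub>m N c :: complex mat)"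
  hence ij: "i < N" "j < c" by simp_all
  have cY: "col Y j \<in> carrier_vec N" using Y by (intro carrier_vecI) simp
  have "S *\<^sub>v col Y j = 0\<^sub>v N"
    using col_mult2[OF S Y ij(2)] unfolding SY using ij by (intro eq_vecI) simp_all
  hence "R *\<^sub>v col Y j = 0\<^sub>v N" using supp cY by blast
  hence "col (R * Y) j $ i = 0" using col_mult2[OF R Y ij(2)] ij by simp
  thus "(R * Y) $$ (i,j) = 0\<^sub>m N c $$ (i,j)" using ij R Y by simp
qed (use R Y in simp_all)

lemma supp_proj_conj_rdiag:
  assumes "psd n A"
  obtains U d where "unitary n U" "A = U * rdiag n d * qadj U" "\<And>k. k < n \<Longrightarrow> 0 \<le> d k"
    "mat_fun n heaviside A = U * rdiag n (\<lambda>k. heaviside (d k)) * qadj U"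
proof -
  obtain U d where U: "unitary n U" and A: "A = U * rdiag n d * qadj U"
    using hermitian_decomp[of n A] assms unfolding psd_def by blast
  show ?thesis
    by (rule that[OF U A psd_eigenvalue_nonneg[OF assms U A] mat_fun_conj_rdiag[OF U A]])
qed

lemma psd_mult_supp_proj:
  assumes "psd n A"
  shows "A * mat_fun n heaviside A = A"
proof -
  obtain U d where U: "unitary n U" and A: "A = U * rdiag n d * qadj U"
    and d: "\<And>k. k < n \<Longrightarrow> 0 \<le> d k" and P: "mat_fun n heaviside A = U * rdiag n (\<lambda>k. heaviside (d k)) * qadj U"
    by (rule supp_proj_conj_rdiag[OF assms]) blast
  have "A * mat_fun n heaviside A = U * rdiag n (\<lambda>k. d k * heaviside (d k)) * qadj U"
    unfolding P by (subst A, rule conj_rdiag_mult[OF U])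
  also have "\<dots> = A"
    unfolding A using d by (intro arg_cong[where f = "\<lambda>x. U * x * qadj U"] rdiag_cong)
      (fastforce simp: heaviside_def)
  finally show ?thesis .
qed

lemma mult_kron_supp_proj:
  assumes \<rho>: "\<rho> \<in> carrier_mat (m*n) (m*n)" and R: "psd m R" and B: "B \<in> carrier_mat n n"
    and supp: "supp_subset (m*n) \<rho> (kron R (1\<^sub>m n))"
  shows "\<rho> * kron (mat_fun m heaviside R) B = \<rho> * kron (1\<^sub>m m) B"
proof -
  obtain U d where U: "unitary m U" and Rd: "R = U * rdiag m d * qadj U"
    and d: "\<And>k. k < m \<Longrightarrow> 0 \<le> d k"
    and P: "mat_fun m heaviside R = U * rdiag m (\<lambda>k. heaviside (d k)) * qadj U"
    by (rule supp_proj_conj_rdiag[OF R]) blast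
  have Uc: "U \<in> carrier_mat m m" using U by simp
  define Q where "Q = U * rdiag m (\<lambda>k. 1 - heaviside (d k)) * qadj U"
  have Qc: "Q \<in> carrier_mat m m" and Pc: "mat_fun m heaviside R \<in> carrier_mat m m"
    unfolding Q_def P by (rule conj_rdiag_carrier[OF Uc])+
  have Rc: "R \<in> carrier_mat m m" by (rule psd_carrier[OF R])
  have PQ: "mat_fun m heaviside R + Q = 1\<^sub>m m"
    unfolding P Q_def conj_rdiag_add[OF Uc] using conj_rdiag_one[OF U] by simp
  have "R * Q = U * rdiag m (\<lambda>k. 0) * qadj U"
    unfolding Rd Q_def conj_rdiag_mult[OF U] using d
    by (intro arg_cong[where f = "\<lambda>x. U * x * qadj U"] rdiag_cong) (fastforce simp: heaviside_def)
  also have "\<dots> = 0\<^sub>m m m" by (rule conj_rdiag_zero[OF Uc])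
  finally have "kron R (1\<^sub>m n) * kron Q (1\<^sub>m n) = 0\<^sub>m (m*n) (m*n)"
    using kron_mult[OF Rc one_carrier_mat Qc one_carrier_mat] by (simp add: kron_zero_left)
  hence "\<rho> * kron Q (1\<^sub>m n) = 0\<^sub>m (m*n) (m*n)"
    by (rule mult_zero_of_supp_subset[OF \<rho> kron_carrier[OF Rc one_carrier_mat]
          kron_carrier[OF Qc one_carrier_mat] supp])
  hence "\<rho> * kron Q B = 0\<^sub>m (m*n) (m*n)"
    using kron_mult[OF Qc one_carrier_mat one_carrier_mat B] Qc B
      assoc_mult_mat[OF \<rho> kron_carrier[OF Qc one_carrier_mat] kron_carrier[OF one_carrier_mat B]]
    by (simp add: left_mult_zero_mat[OF kron_carrier[OF one_carrier_mat B]])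
  moreover have "kron (1\<^sub>m m) B = kron (mat_fun m heaviside R) B + kron Q B"
    unfolding PQ[symmetric] by (rule kron_add_left[OF Pc Qc])
  ultimately show ?thesis
    using mult_add_distrib_mat[OF \<rho> kron_carrier[OF Pc B] kron_carrier[OF Qc B]]
      right_add_zero_mat[OF mult_carrier_mat[OF \<rho> kron_carrier[OF Pc B]]] by simp
qed

lemma rel_ent_supp: "supp_subset N \<rho> \<sigma> \<Longrightarrow>
    rel_ent N \<rho> \<sigma> = ereal (Re (qtr (\<rho> * (mat_fun N lnp \<rho> - mat_fun N lnp \<sigma>))))"
  by (simp add: rel_ent_def)

lemma rel_ent_not_supp: "\<not> supp_subset N \<rho> \<sigma> \<Longrightarrow> rel_ent N \<rho> \<sigma> = \<infinity>"
  unfolding rel_ent_def by (simp only: if_False)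

lemma rel_ent_kron_gibbs:
  assumes \<rho>: "hermitian (m*n) \<rho>" and R: "psd m R" and H: "hermitian n H"
  shows "rel_ent (m*n) \<rho> (kron R (gibbs n \<beta> H))
    = rel_ent (m*n) \<rho> (kron R (1\<^sub>m n)) + ereal (\<beta> * Re (qtr (\<rho> * kron (1\<^sub>m m) H)))"
proof (cases "supp_subset (m*n) \<rho> (kron R (1\<^sub>m n))")
  case False
  hence "\<not> supp_subset (m*n) \<rho> (kron R (gibbs n \<beta> H))"
    by (simp only: supp_subset_kron_gibbs_iff[OF psd_carrier[OF R] H] not_False_eq_True)
  hence "rel_ent (m*n) \<rho> (kron R (gibbs n \<beta> H)) = \<infinity>" by (rule rel_ent_not_supp)
  moreover have "rel_ent (m*n) \<rho> (kron R (1\<^sub>m n)) = \<infinity>" using False by (rule rel_ent_not_supp)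
  ultimately show ?thesis by simp
next
  case True
  have \<rho>c: "\<rho> \<in> carrier_mat (m*n) (m*n)" and Hc: "H \<in> carrier_mat n n"
    using \<rho> H by (simp_all add: hermitian_def)
  have hR: "hermitian m R" using R by (simp add: psd_def)
  let ?L = "mat_fun (m*n) lnp \<rho>" and ?lR = "mat_fun m lnp R" and ?PR = "mat_fun m heaviside R"
  have L: "?L \<in> carrier_mat (m*n) (m*n)" by (rule mat_fun_carrier[OF \<rho>])
  have K1: "kron ?lR (1\<^sub>m n) \<in> carrier_mat (m*n) (m*n)"
    by (rule kron_carrier[OF mat_fun_carrier[OF hR] one_carrier_mat])
  have K2: "kron ?PR H \<in> carrier_mat (m*n) (m*n)"
    by (rule kron_carrier[OF mat_fun_carrier[OF hR] Hc])
  have K2': "kron ?PR (complex_of_real (- \<beta>) \<cdot>\<^sub>m H) \<in> carrier_mat (m*n) (m*n)"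
    by (rule kron_carrier[OF mat_fun_carrier[OF hR] smult_carrier_mat[OF Hc]])
  have "qtr (\<rho> * (?L - mat_fun (m*n) lnp (kron R (gibbs n \<beta> H))))
      = qtr (\<rho> * ?L) - (qtr (\<rho> * kron ?lR (1\<^sub>m n)) + qtr (\<rho> * kron ?PR (complex_of_real (- \<beta>) \<cdot>\<^sub>m H)))"
    unfolding mat_fun_lnp_kron_gibbs[OF hR H] qtr_mult_minus[OF \<rho>c L add_carrier_mat[OF K2']]
      qtr_mult_add[OF \<rho>c K1 K2'] ..
  moreover have "qtr (\<rho> * kron ?PR (complex_of_real (- \<beta>) \<cdot>\<^sub>m H)) = - \<beta> * qtr (\<rho> * kron (1\<^sub>m m) H)"
    unfolding kron_smult_right qtr_mult_smult[OF \<rho>c K2] mult_kron_supp_proj[OF \<rho>c R Hc True] by simp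
  moreover have "qtr (\<rho> * (?L - mat_fun (m*n) lnp (kron R (1\<^sub>m n))))
      = qtr (\<rho> * ?L) - qtr (\<rho> * kron ?lR (1\<^sub>m n))"
    unfolding mat_fun_lnp_kron_one[OF hR] by (rule qtr_mult_minus[OF \<rho>c L K1])
  ultimately have "qtr (\<rho> * (?L - mat_fun (m*n) lnp (kron R (gibbs n \<beta> H))))
      = qtr (\<rho> * (?L - mat_fun (m*n) lnp (kron R (1\<^sub>m n)))) + \<beta> * qtr (\<rho> * kron (1\<^sub>m m) H)"
    by simp
  thus ?thesis
    using True supp_subset_kron_gibbs_iff[OF psd_carrier[OF R] H] by (simp add: rel_ent_supp)
qed

lemma rel_ent_kron_one:
  assumes R: "density m R" and \<omega>: "density n \<omega>"
  shows "rel_ent (m*n) (kron R \<omega>) (kron R (1\<^sub>m n)) = ereal (- vn_ent n \<omega>)"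
proof -
  have Rp: "psd m R" and \<omega>p: "psd n \<omega>" and trR: "qtr R = 1" and tr\<omega>: "qtr \<omega> = 1"
    using R \<omega> by (simp_all add: density_def)
  have hR: "hermitian m R" and h\<omega>: "hermitian n \<omega>" using Rp \<omega>p by (simp_all add: psd_def)
  have Rc: "R \<in> carrier_mat m m" and \<omega>c: "\<omega> \<in> carrier_mat n n"
    using hR h\<omega> by (simp_all add: hermitian_def)
  let ?lR = "mat_fun m lnp R" and ?PR = "mat_fun m heaviside R"
    and ?l\<omega> = "mat_fun n lnp \<omega>" and ?P\<omega> = "mat_fun n heaviside \<omega>"
  have lR: "?lR \<in> carrier_mat m m" and PR: "?PR \<in> carrier_mat m m"
    and l\<omega>: "?l\<omega> \<in> carrier_mat n n" and P\<omega>: "?P\<omega> \<in> carrier_mat n n"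
    using mat_fun_carrier[OF hR] mat_fun_carrier[OF h\<omega>] by blast+
  obtain U d where U: "unitary m U" and Rd: "R = U * rdiag m d * qadj U"
    using hermitian_decomp[OF hR] .
  obtain Y w where Y: "unitary n Y" and \<omega>d: "\<omega> = Y * rdiag n w * qadj Y"
    and w: "\<And>k. k < n \<Longrightarrow> 0 \<le> w k"
    by (rule supp_proj_conj_rdiag[OF \<omega>p]) blast
  have L: "mat_fun (m*n) lnp (kron R \<omega>) = kron ?lR ?P\<omega> + kron ?PR ?l\<omega>"
    by (rule mat_fun_lnp_kron[OF U Y w Rd \<omega>d])
  have \<rho>c: "kron R \<omega> \<in> carrier_mat (m*n) (m*n)" by (rule kron_carrier[OF Rc \<omega>c])
  have K1: "kron ?lR ?P\<omega> \<in> carrier_mat (m*n) (m*n)" and K2: "kron ?PR ?l\<omega> \<in> carrier_mat (m*n) (m*n)"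
    and K3: "kron ?lR (1\<^sub>m n) \<in> carrier_mat (m*n) (m*n)"
    by (rule kron_carrier; fact)+ (rule kron_carrier[OF lR one_carrier_mat])
  have "kron R \<omega> = kron (1\<^sub>m m) \<omega> * kron R (1\<^sub>m n)"
    using kron_mult[OF one_carrier_mat \<omega>c Rc one_carrier_mat] Rc \<omega>c by simp
  hence supp: "supp_subset (m*n) (kron R \<omega>) (kron R (1\<^sub>m n))"
    using supp_subset_mult_left[OF kron_carrier[OF one_carrier_mat \<omega>c] kron_carrier[OF Rc one_carrier_mat]]
    by simp
  have "qtr (kron R \<omega> * (mat_fun (m*n) lnp (kron R \<omega>) - mat_fun (m*n) lnp (kron R (1\<^sub>m n))))
      = qtr (R * ?lR) * qtr (\<omega> * ?P\<omega>) + qtr (R * ?PR) * qtr (\<omega> * ?l\<omega>) - qtr (R * ?lR) * qtr (\<omega> * 1\<^sub>m n)"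
    unfolding L mat_fun_lnp_kron_one[OF hR]
    by (simp add: qtr_mult_minus[OF \<rho>c add_carrier_mat[OF K2] K3] qtr_mult_add[OF \<rho>c K1 K2]
        qtr_kron_mult[OF Rc \<omega>c lR P\<omega>] qtr_kron_mult[OF Rc \<omega>c PR l\<omega>]
        qtr_kron_mult[OF Rc \<omega>c lR one_carrier_mat])
  also have "\<dots> = qtr (\<omega> * ?l\<omega>)"
    using psd_mult_supp_proj[OF Rp] psd_mult_supp_proj[OF \<omega>p] trR tr\<omega> \<omega>c by simp
  finally show ?thesis using supp by (simp add: rel_ent_supp vn_ent_def)
qed

section \<open>Channels with a noninteracting reference\<close>

lemma density_ptr2: "density (k*m) X \<Longrightarrow> density k (ptr2 k m X)"
  unfolding density_def using ptr2_psd qtr_ptr2 psd_carrier by metis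

lemma hermitian_kron: "hermitian a A \<Longrightarrow> hermitian b B \<Longrightarrow> hermitian (a*b) (kron A B)"
  unfolding hermitian_def by (simp add: qadj_kron kron_carrier)

lemma ptr2_replacer_output:
  assumes "\<omega> \<in> carrier_mat n n" and "qtr \<omega> = 1"
  shows "ptr2 m n (id_tensor m m n (replacer \<omega>) \<psi>) = ptr2 m m \<psi>"
  unfolding id_tensor_replacer[OF assms(1)] ptr2_kron[OF ptr2_carrier assms(1)] assms(2)
  by (rule eq_matI) auto

lemma rel_ent_thermal_output:
  assumes out: "hermitian (m*n) (id_tensor m m n M \<psi>)"
    and ptr: "ptr2 m n (id_tensor m m n M \<psi>) = ptr2 m m \<psi>"
    and \<psi>: "density (m*m) \<psi>" and H_A: "hermitian n H_A" and H_R: "H_R \<in> carrier_mat m m"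
  shows "rel_ent (m*n) (id_tensor m m n M \<psi>) (id_tensor m m n (replacer (gibbs n \<beta> H_A)) \<psi>)
    = rel_ent (m*n) (id_tensor m m n M \<psi>) (id_tensor m m n (replacer (1\<^sub>m n)) \<psi>)
      + ereal \<beta> * ereal (energy (kron H_R (1\<^sub>m n) + kron (1\<^sub>m m) H_A) (id_tensor m m n M \<psi>)
                    - energy H_R (ptr2 m m \<psi>))"
proof -
  let ?\<rho> = "id_tensor m m n M \<psi>"
  have R: "psd m (ptr2 m m \<psi>)" using ptr2_psd \<psi> by (simp add: density_def)
  have "energy (kron H_R (1\<^sub>m n) + kron (1\<^sub>m m) H_A) ?\<rho> - energy H_R (ptr2 m m \<psi>)
      = Re (qtr (?\<rho> * kron (1\<^sub>m m) H_A))"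
    using energy_noninteracting_diff[OF id_tensor_carrier[of m m n M \<psi>] H_R] H_A
    unfolding ptr by (simp add: hermitian_def)
  thus ?thesis
    using rel_ent_kron_gibbs[OF out R H_A]
    by (simp add: id_tensor_replacer gibbs_carrier[OF H_A])
qed

lemma rel_ent_replacer_output:
  assumes \<omega>: "density n \<omega>" and \<psi>: "density (m*m) \<psi>"
  shows "rel_ent (m*n) (id_tensor m m n (replacer \<omega>) \<psi>) (id_tensor m m n (replacer (1\<^sub>m n)) \<psi>)
      = ereal (- vn_ent n \<omega>)"
proof -
  have "\<omega> \<in> carrier_mat n n" using \<omega> by (simp add: density_def psd_carrier)
  show ?thesis unfolding id_tensor_replacer[OF one_carrier_mat] id_tensor_replacer[OF \<open>\<omega> \<in> carrier_mat n n\<close>]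
    by (rule rel_ent_kron_one[OF density_ptr2[OF \<psi>] \<omega>])
qed

lemma energy_replacer_output:
  assumes \<omega>: "density n \<omega>" and \<psi>: "density (m*m) \<psi>"
    and H_A: "H_A \<in> carrier_mat n n" and H_R: "H_R \<in> carrier_mat m m"
  shows "energy (kron H_R (1\<^sub>m n) + kron (1\<^sub>m m) H_A) (id_tensor m m n (replacer \<omega>) \<psi>)
      - energy H_R (ptr2 m m \<psi>) = energy H_A \<omega>"
proof -
  let ?R = "ptr2 m m \<psi>"
  have Rc: "?R \<in> carrier_mat m m" by (rule ptr2_carrier)
  have trR: "qtr ?R = 1" using density_ptr2[OF \<psi>] by (simp add: density_def)
  have \<omega>c: "\<omega> \<in> carrier_mat n n" and tr\<omega>: "qtr \<omega> = 1"
    using \<omega> by (simp_all add: density_def psd_carrier)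
  have "qtr (kron ?R \<omega> * kron (1\<^sub>m m) H_A) = qtr (H_A * \<omega>)"
    using qtr_kron_mult[OF Rc \<omega>c one_carrier_mat H_A] Rc trR qtr_comm[OF \<omega>c H_A] by simp
  moreover have "ptr2 m n (kron ?R \<omega>) = ?R"
    using ptr2_replacer_output[OF \<omega>c tr\<omega>, of m \<psi>] unfolding id_tensor_replacer[OF \<omega>c] .
  ultimately show ?thesis
    using energy_noninteracting_diff[OF kron_carrier[OF Rc \<omega>c] H_R H_A]
    unfolding id_tensor_replacer[OF \<omega>c] by (simp add: energy_def)
qed

lemma density_states_nonempty: "0 < m \<Longrightarrow> {\<psi>. density (m*m) \<psi>} \<noteq> {}"
  using density_exists[of "m*m"] by simp

lemma chan_div_not_minf:
  assumes "0 < m"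
  shows "chan_div m n N M \<noteq> -\<infinity>"
proof -
  obtain \<psi> where "density (m*m) \<psi>" using density_states_nonempty[OF assms] by blast
  hence "rel_ent (m*n) (id_tensor m m n N \<psi>) (id_tensor m m n M \<psi>) \<le> chan_div m n N M"
    unfolding chan_div_def by (intro SUP_upper) simp
  thus ?thesis by (auto simp: rel_ent_def split: if_splits)
qed

lemma chan_energy_not_minf:
  assumes "0 < m"
  shows "chan_energy m n H_RA H_R N \<noteq> -\<infinity>"
proof -
  obtain \<psi> where "density (m*m) \<psi>" using density_states_nonempty[OF assms] by blast
  hence "ereal (energy H_RA (id_tensor m m n N \<psi>) - energy H_R (ptr2 m m \<psi>)) \<le> chan_energy m n H_RA H_R N"
    unfolding chan_energy_def by (intro SUP_upper) simp
  thus ?thesis by auto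
qed

lemma SUP_add_scaled_le:
  fixes f g :: "'a \<Rightarrow> ereal"
  assumes "0 \<le> c"
  shows "(SUP x\<in>S. f x + ereal c * g x) \<le> (SUP x\<in>S. f x) + ereal c * (SUP x\<in>S. g x)"
proof (rule SUP_least)
  fix x assume x: "x \<in> S"
  have "ereal c * g x \<le> ereal c * (SUP x\<in>S. g x)"
    using assms by (intro ereal_mult_left_mono SUP_upper x) simp_all
  thus "f x + ereal c * g x \<le> (SUP x\<in>S. f x) + ereal c * (SUP x\<in>S. g x)"
    by (intro add_mono SUP_upper x)
qed

lemma ereal_inverse_scale_add:
  fixes a b :: ereal
  assumes "0 < \<beta>" and "a \<noteq> -\<infinity>" and "b \<noteq> -\<infinity>"
  shows "ereal (1/\<beta>) * (a + ereal \<beta> * b) = b - ereal (1/\<beta>) * (- a)"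
  using assms by (cases a; cases b) (simp_all add: field_simps)

lemma chan_div_thermal_le:
  assumes N: "channel m n N" and \<beta>: "0 \<le> \<beta>" and H_A: "hermitian n H_A" and H_R: "H_R \<in> carrier_mat m m"
  shows "chan_div m n N (replacer (gibbs n \<beta> H_A))
    \<le> chan_div m n N (replacer (1\<^sub>m n))
      + ereal \<beta> * chan_energy m n (kron H_R (1\<^sub>m n) + kron (1\<^sub>m m) H_A) H_R N"
proof -
  have "hermitian (m*n) (id_tensor m m n N \<psi>)" if "density (m*m) \<psi>" for \<psi>
    using channel_cp[OF N] that by (simp add: density_def psd_def)
  note per = rel_ent_thermal_output[OF this ptr2_id_tensor_channel[OF N] _ H_A H_R]
  have "chan_div m n N (replacer (gibbs n \<beta> H_A))
    = (SUP \<psi>\<in>{\<psi>. density (m*m) \<psi>}.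
        rel_ent (m*n) (id_tensor m m n N \<psi>) (id_tensor m m n (replacer (1\<^sub>m n)) \<psi>)
        + ereal \<beta> * ereal (energy (kron H_R (1\<^sub>m n) + kron (1\<^sub>m m) H_A) (id_tensor m m n N \<psi>)
                    - energy H_R (ptr2 m m \<psi>)))"
    unfolding chan_div_def by (rule SUP_cong[OF refl], rule per) simp_all
  also have "\<dots> \<le> chan_div m n N (replacer (1\<^sub>m n))
      + ereal \<beta> * chan_energy m n (kron H_R (1\<^sub>m n) + kron (1\<^sub>m m) H_A) H_R N"
    unfolding chan_div_def chan_energy_def by (rule SUP_add_scaled_le[OF \<beta>])
  finally show ?thesis .
qed

lemma chan_div_replacer_one:
  assumes "0 < m" and "density n \<omega>"
  shows "chan_div m n (replacer \<omega>) (replacer (1\<^sub>m n)) = ereal (- vn_ent n \<omega>)"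
  unfolding chan_div_def using density_states_nonempty[OF assms(1)]
  by (simp add: rel_ent_replacer_output[OF assms(2)])

lemma chan_energy_replacer:
  assumes "0 < m" and "density n \<omega>" and "H_A \<in> carrier_mat n n" and "H_R \<in> carrier_mat m m"
  shows "chan_energy m n (kron H_R (1\<^sub>m n) + kron (1\<^sub>m m) H_A) H_R (replacer \<omega>) = ereal (energy H_A \<omega>)"
  unfolding chan_energy_def using density_states_nonempty[OF assms(1)]
  by (simp add: energy_replacer_output[OF assms(2) _ assms(3,4)])

lemma chan_div_replacer_thermal:
  assumes "0 < m" and \<omega>: "density n \<omega>" and H_A: "hermitian n H_A"
  shows "chan_div m n (replacer \<omega>) (replacer (gibbs n \<beta> H_A))
    = ereal (- vn_ent n \<omega> + \<beta> * energy H_A \<omega>)"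
proof -
  have \<omega>c: "\<omega> \<in> carrier_mat n n" and tr\<omega>: "qtr \<omega> = 1" and h\<omega>: "hermitian n \<omega>"
    using \<omega> by (simp_all add: density_def psd_def hermitian_def)
  have out: "hermitian (m*n) (id_tensor m m n (replacer \<omega>) \<psi>)" if "density (m*m) \<psi>" for \<psi>
    unfolding id_tensor_replacer[OF \<omega>c]
    using hermitian_kron[OF _ h\<omega>] density_ptr2[OF that] by (simp add: density_def psd_def)
  have H_Ac: "H_A \<in> carrier_mat n n" using H_A by (simp add: hermitian_def)
  have "rel_ent (m*n) (id_tensor m m n (replacer \<omega>) \<psi>) (id_tensor m m n (replacer (gibbs n \<beta> H_A)) \<psi>)
      = ereal (- vn_ent n \<omega> + \<beta> * energy H_A \<omega>)" if \<psi>: "density (m*m) \<psi>" for \<psi>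
  proof -
    have ptr: "ptr2 m n (id_tensor m m n (replacer \<omega>) \<psi>) = ptr2 m m \<psi>"
      by (rule ptr2_replacer_output[OF \<omega>c tr\<omega>])
    \<comment> \<open>the reference Hamiltonian cancels, so any one will do\<close>
    have zero: "(0\<^sub>m m m :: complex mat) \<in> carrier_mat m m" by simp
    from rel_ent_thermal_output[OF out[OF \<psi>] ptr \<psi> H_A zero] show ?thesis
      by (simp add: rel_ent_replacer_output[OF \<omega> \<psi>] energy_replacer_output[OF \<omega> \<psi> H_Ac zero])
  qed
  thus ?thesis
    unfolding chan_div_def using density_states_nonempty[OF assms(1)] by simp
qed

theorem theorem4:
  fixes m n :: nat and \<beta> :: real
    and H_A H_R H_RA :: "complex mat"
    and N :: "complex mat \<Rightarrow> complex mat"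
  assumes "0 < m" and "0 < n" and "0 < \<beta>"
    and "hermitian n H_A" and "hermitian m H_R"
    and "H_RA = kron H_R (1\<^sub>m n) + kron (1\<^sub>m m) H_A"
    and "channel m n N"
  shows "free_energy_T m n \<beta> H_A N
           \<le> chan_energy m n H_RA H_R N - ereal (1/\<beta>) * chan_ent m n N
      \<and> (\<forall>\<omega>. density n \<omega> \<longrightarrow>
           free_energy_T m n \<beta> H_A (replacer \<omega>)
             = chan_energy m n H_RA H_R (replacer \<omega>) - ereal (1/\<beta>) * chan_ent m n (replacer \<omega>)
         \<and> free_energy_T m n \<beta> H_A (replacer \<omega>)
             = ereal (energy H_A \<omega> - (1/\<beta>) * vn_ent n \<omega>))"
proof -
  have m: "0 < m" and \<beta>: "0 < \<beta>" and H_A: "hermitian n H_A" using assms by simp_all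
  have H_Ac: "H_A \<in> carrier_mat n n" and H_Rc: "H_R \<in> carrier_mat m m"
    using assms(4,5) by (simp_all add: hermitian_def)
  have "free_energy_T m n \<beta> H_A N
      \<le> ereal (1/\<beta>) * (chan_div m n N (replacer (1\<^sub>m n)) + ereal \<beta> * chan_energy m n H_RA H_R N)"
    unfolding free_energy_T_def assms(6) using \<beta>
    by (intro ereal_mult_left_mono chan_div_thermal_le[OF assms(7) _ H_A H_Rc]) simp_all
  also have "\<dots> = chan_energy m n H_RA H_R N - ereal (1/\<beta>) * chan_ent m n N"
    unfolding chan_ent_def by (rule ereal_inverse_scale_add[OF \<beta> chan_div_not_minf[OF m] chan_energy_not_minf[OF m]])
  finally have bound: "free_energy_T m n \<beta> H_A N \<le> chan_energy m n H_RA H_R N - ereal (1/\<beta>) * chan_ent m n N" .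
  have "free_energy_T m n \<beta> H_A (replacer \<omega>) = ereal (energy H_A \<omega> - (1/\<beta>) * vn_ent n \<omega>)"
    and "chan_energy m n H_RA H_R (replacer \<omega>) - ereal (1/\<beta>) * chan_ent m n (replacer \<omega>)
      = ereal (energy H_A \<omega> - (1/\<beta>) * vn_ent n \<omega>)" if \<omega>: "density n \<omega>" for \<omega>
    using chan_div_replacer_thermal[OF m \<omega> H_A] chan_div_replacer_one[OF m \<omega>]
      chan_energy_replacer[OF m \<omega> H_Ac H_Rc] \<beta>
    unfolding free_energy_T_def chan_ent_def assms(6) by (simp_all add: field_simps)
  with bound show ?thesis by simp
qed

end
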